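(* Let $G$ be a GP 2 host graph (node labels arbitrary lists) such that every node is marked grey, exactly one node $r$ is a root, every edge is unmarked and labelled with an integer (its weight), and there are no loops. Then the execution of the GP 2 program bellman-ford on $G$ terminates, and: if $G$ contains a directed cycle whose sum of edge labels is negative and which is reachable by a directed path from $r$, the program fails; otherwise it returns the graph obtained from $G$ by (1) appending to the label of each node $v$ reachable from $r$ by a directed path the minimum, over all directed paths from $r$ to $v$, of the sum of the edge labels along the path (this is $0$ for $v=r$), (2) appending the string "f" to the label of every other node, and (3) marking all edges blue.
   Context: GP 2 semantics. Host graphs are finite directed graphs whose nodes and edges carry labels (lists of integers and strings; "x:s" denotes the list x followed by the atom s) and marks (nodes: unmarked, red, green, blue, grey; edges: unmarked, red, green, blue, dashed); some nodes are roots. A rule (with typed variables, here list variables x,y and integer variables i,s,t,w) is applied by finding an injective match of its left-hand side compatible with labels (for some instantiation of variables of the right types) and marks (mark "any" matches every mark; roots match roots), satisfying the dangling condition (a left-hand node that is not kept must have no incident edges outside the match) and the rule's condition, then deleting/changing/adding items as prescribed by the right-hand side. Commands: a rule set call $\{r_1,\dots,r_k\}$ applies one applicable rule, failing if none applies; $P;Q$ sequencing (failure of $P$ or $Q$ makes $P;Q$ fail); $P!$ iterates $P$ until it fails, returning the graph on which $P$ was last entered; "try $C$ then $P$ else $Q$" runs $C$ and continues with $P$ on its result if it succeeded, else $Q$ on the original graph (missing branches do nothing); "if $C$ then $P$ else $Q$" runs $C$ on a copy then $P$ (if $C$ succeeded) or $Q$ on the original; fail causes failure. The program bellman-ford: Main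 = set_counter; count!; (decrement; Relax!; Clean!)!; Final Relax = root1; try no_deg else ((unmarked_edge; try {unvisited, reduce}; finish)!; unroot1) Clean = root2; unmark_edge!; unroot2 Final = (root1; (unmarked_edge; if reduce then set_flag; finish)!; unroot1)!; if flag then fail; delete_counter; no_deg_inv! Rules (edges directed from node 1 to node 2; labels unchanged unless stated): - set_counter(x): a grey root labelled x becomes a blue non-root labelled x:0; a new green non-root node labelled 0 is created, with a new dashed edge (empty label) from it to node 1. - count(x; i): a grey node 1 labelled x and a green node 2 labelled i; node 1 becomes blue labelled x:"f", node 2 gets label i+1. - decrement(i): a green node labelled i, where i>0; its label becomes i−1. - root1(x): a blue node becomes a blue root. - no_deg(x): a blue root labelled x is deleted (so by the dangling condition only if it has no incident edges) and replaced by an unmarked non-root node labelled x. - unmarked_edge: blue root 1, node 2 of any mark, unmarked edge 1→2; the edge becomes red. - unvisited(x,y; s,w): blue root 1 labelled x:s, node 2 (any mark) labelled y:"f", red edge 1→2 labelled w; node 2's label becomes y:(s+w). - reduce(x,y; s,t,w): blue root 1 labelled x:s, node 2 (any mark) labelled y:t, red edge 1→2 labelled w, condition s+w<t; node 2's label becomes y:(s+w). - finish: blue root 1, node 2 any mark, red edge 1→2; edge becomes blue. - unroot1: blue root becomes a grey non-root. - root2: grey node becomes a blue root. - unmark_edge: blue root 1, node 2 any mark, blue edge 1→2; edge becomes unmarked. - unroot2: blue root becomes a blue non-root. - set_flag(x): a green node; its label becomes −1. - flag(): a green node labelled −1; no change (test). - delete_counter(x,y): a grey node 1 labelled x, a green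 node labelled y and a dashed edge from the green node to node 1; the green node and dashed edge are deleted and node 1 becomes a grey root. - no_deg_inv(x): an unmarked node becomes grey. *)

theory Defs
  imports Main
begin

datatype atom = AInt int | AStr string
type_synonym label = "atom list"

datatype nmark = NUnmarked | NRed | NGreen | NBlue | NGrey
datatype emark = EUnmarked | ERed | EGreen | EBlue | EDashed

text \<open>A host graph. Items are natural numbers; the functions are only relevant
  on the node set / edge set (values outside are junk and ignored by isomorphism).\<close>
record hgraph =
  nodes :: "nat set"
  edges :: "nat set"
  src :: "nat \<Rightarrow> nat"
  tgt :: "nat \<Rightarrow> nat"
  nlab :: "nat \<Rightarrow> label"
  nmark :: "nat \<Rightarrow> nmark"
  isroot :: "nat \<Rightarrow> bool"
  elab :: "nat \<Rightarrow> label"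
  emark :: "nat \<Rightarrow> emark"

definition wf_hgraph :: "hgraph \<Rightarrow> bool" where
  "wf_hgraph G \<longleftrightarrow> finite (nodes G) \<and> finite (edges G) \<and>
     (\<forall>e\<in>edges G. src G e \<in> nodes G \<and> tgt G e \<in> nodes G)"

definition iso :: "hgraph \<Rightarrow> hgraph \<Rightarrow> bool" where
  "iso G H \<longleftrightarrow> (\<exists>f g. bij_betw f (nodes G) (nodes H) \<and> bij_betw g (edges G) (edges H) \<and>
     (\<forall>e\<in>edges G. src H (g e) = f (src G e) \<and> tgt H (g e) = f (tgt G e) \<and>
                    elab H (g e) = elab G e \<and> emark H (g e) = emark G e) \<and>
     (\<forall>v\<in>nodes G. nlab H (f v) = nlab G v \<and> nmark H (f v) = nmark G v \<and>
                    isroot H (f v) = isroot G v))"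

datatype rule =
  set_counter | count | decrement | root1 | no_deg | unmarked_edge | unvisited | reduce
  | finish | unroot1 | root2 | unmark_edge | unroot2 | set_flag | flag | delete_counter
  | no_deg_inv

text \<open>Matches are injective (distinct rule nodes are distinct host nodes), respect marks
  ("any" = no constraint), rule roots match only roots, and satisfy the dangling condition.
  Unmentioned labels are list variables (match anything, kept unchanged).\<close>
fun apply_rule :: "rule \<Rightarrow> hgraph \<Rightarrow> hgraph \<Rightarrow> bool" where
  "apply_rule set_counter G H = (\<exists>n m d. n \<in> nodes G \<and> nmark G n = NGrey \<and> isroot G n \<and>
      m \<notin> nodes G \<and> d \<notin> edges G \<and>
      H = G\<lparr>nodes := insert m (nodes G), edges := insert d (edges G),
            src := (src G)(d := m), tgt := (tgt G)(d := n),
            nlab := (nlab G)(n := nlab G n @ [AInt 0], m := [AInt 0]),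
            nmark := (nmark G)(n := NBlue, m := NGreen),
            isroot := (isroot G)(n := False, m := False),
            elab := (elab G)(d := []), emark := (emark G)(d := EDashed)\<rparr>)"
| "apply_rule count G H = (\<exists>n m i. n \<in> nodes G \<and> m \<in> nodes G \<and> n \<noteq> m \<and>
      nmark G n = NGrey \<and> nmark G m = NGreen \<and> nlab G m = [AInt i] \<and>
      H = G\<lparr>nlab := (nlab G)(n := nlab G n @ [AStr ''f''], m := [AInt (i + 1)]),
            nmark := (nmark G)(n := NBlue)\<rparr>)"
| "apply_rule decrement G H = (\<exists>n i. n \<in> nodes G \<and> nmark G n = NGreen \<and>
      nlab G n = [AInt i] \<and> i > 0 \<and>
      H = G\<lparr>nlab := (nlab G)(n := [AInt (i - 1)])\<rparr>)"
| "apply_rule root1 G H = (\<exists>n. n \<in> nodes G \<and> nmark G n = NBlue \<and>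
      H = G\<lparr>isroot := (isroot G)(n := True)\<rparr>)"
| "apply_rule no_deg G H = (\<exists>n m. n \<in> nodes G \<and> nmark G n = NBlue \<and> isroot G n \<and>
      (\<forall>e\<in>edges G. src G e \<noteq> n \<and> tgt G e \<noteq> n) \<and> m \<notin> nodes G - {n} \<and>
      H = G\<lparr>nodes := insert m (nodes G - {n}), nlab := (nlab G)(m := nlab G n),
            nmark := (nmark G)(m := NUnmarked), isroot := (isroot G)(m := False)\<rparr>)"
| "apply_rule unmarked_edge G H = (\<exists>n m e. n \<in> nodes G \<and> m \<in> nodes G \<and> n \<noteq> m \<and>
      e \<in> edges G \<and> src G e = n \<and> tgt G e = m \<and> nmark G n = NBlue \<and> isroot G n \<and>
      emark G e = EUnmarked \<and> H = G\<lparr>emark := (emark G)(e := ERed)\<rparr>)"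
| "apply_rule unvisited G H = (\<exists>n m e x y s w. n \<in> nodes G \<and> m \<in> nodes G \<and> n \<noteq> m \<and>
      e \<in> edges G \<and> src G e = n \<and> tgt G e = m \<and> nmark G n = NBlue \<and> isroot G n \<and>
      emark G e = ERed \<and> nlab G n = x @ [AInt s] \<and> nlab G m = y @ [AStr ''f''] \<and>
      elab G e = [AInt w] \<and> H = G\<lparr>nlab := (nlab G)(m := y @ [AInt (s + w)])\<rparr>)"
| "apply_rule reduce G H = (\<exists>n m e x y s t w. n \<in> nodes G \<and> m \<in> nodes G \<and> n \<noteq> m \<and>
      e \<in> edges G \<and> src G e = n \<and> tgt G e = m \<and> nmark G n = NBlue \<and> isroot G n \<and>
      emark G e = ERed \<and> nlab G n = x @ [AInt s] \<and> nlab G m = y @ [AInt t] \<and>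
      elab G e = [AInt w] \<and> s + w < t \<and> H = G\<lparr>nlab := (nlab G)(m := y @ [AInt (s + w)])\<rparr>)"
| "apply_rule finish G H = (\<exists>n m e. n \<in> nodes G \<and> m \<in> nodes G \<and> n \<noteq> m \<and>
      e \<in> edges G \<and> src G e = n \<and> tgt G e = m \<and> nmark G n = NBlue \<and> isroot G n \<and>
      emark G e = ERed \<and> H = G\<lparr>emark := (emark G)(e := EBlue)\<rparr>)"
| "apply_rule unroot1 G H = (\<exists>n. n \<in> nodes G \<and> nmark G n = NBlue \<and> isroot G n \<and>
      H = G\<lparr>nmark := (nmark G)(n := NGrey), isroot := (isroot G)(n := False)\<rparr>)"
| "apply_rule root2 G H = (\<exists>n. n \<in> nodes G \<and> nmark G n = NGrey \<and>
      H = G\<lparr>nmark := (nmark G)(n := NBlue), isroot := (isroot G)(n := True)\<rparr>)"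
| "apply_rule unmark_edge G H = (\<exists>n m e. n \<in> nodes G \<and> m \<in> nodes G \<and> n \<noteq> m \<and>
      e \<in> edges G \<and> src G e = n \<and> tgt G e = m \<and> nmark G n = NBlue \<and> isroot G n \<and>
      emark G e = EBlue \<and> H = G\<lparr>emark := (emark G)(e := EUnmarked)\<rparr>)"
| "apply_rule unroot2 G H = (\<exists>n. n \<in> nodes G \<and> nmark G n = NBlue \<and> isroot G n \<and>
      H = G\<lparr>isroot := (isroot G)(n := False)\<rparr>)"
| "apply_rule set_flag G H = (\<exists>n. n \<in> nodes G \<and> nmark G n = NGreen \<and>
      H = G\<lparr>nlab := (nlab G)(n := [AInt (-1)])\<rparr>)"
| "apply_rule flag G H = (\<exists>n. n \<in> nodes G \<and> nmark G n = NGreen \<and>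
      nlab G n = [AInt (-1)] \<and> H = G)"
| "apply_rule delete_counter G H = (\<exists>n m d. n \<in> nodes G \<and> m \<in> nodes G \<and> n \<noteq> m \<and>
      d \<in> edges G \<and> src G d = m \<and> tgt G d = n \<and> nmark G n = NGrey \<and> nmark G m = NGreen \<and>
      emark G d = EDashed \<and> (\<forall>e\<in>edges G. (src G e = m \<or> tgt G e = m) \<longrightarrow> e = d) \<and>
      H = G\<lparr>nodes := nodes G - {m}, edges := edges G - {d},
            isroot := (isroot G)(n := True)\<rparr>)"
| "apply_rule no_deg_inv G H = (\<exists>n. n \<in> nodes G \<and> nmark G n = NUnmarked \<and>
      H = G\<lparr>nmark := (nmark G)(n := NGrey)\<rparr>)"

datatype cmd = Call "rule list" | Seq cmd cmd | Loop cmd | Try cmd cmd cmd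
  | If cmd cmd cmd | Skip | FailC

datatype result = Ok hgraph | Fail

inductive exec :: "cmd \<Rightarrow> hgraph \<Rightarrow> result \<Rightarrow> bool" where
  call_ok: "r \<in> set rs \<Longrightarrow> apply_rule r G H \<Longrightarrow> exec (Call rs) G (Ok H)"
| call_fail: "(\<forall>r\<in>set rs. \<not> (\<exists>H. apply_rule r G H)) \<Longrightarrow> exec (Call rs) G Fail"
| skip: "exec Skip G (Ok G)"
| failc: "exec FailC G Fail"
| seq_ok: "exec P G (Ok H) \<Longrightarrow> exec Q H R \<Longrightarrow> exec (Seq P Q) G R"
| seq_fail: "exec P G Fail \<Longrightarrow> exec (Seq P Q) G Fail"
| loop_step: "exec P G (Ok H) \<Longrightarrow> exec (Loop P) H R \<Longrightarrow> exec (Loop P) G R"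
| loop_end: "exec P G Fail \<Longrightarrow> exec (Loop P) G (Ok G)"
| try_ok: "exec C G (Ok H) \<Longrightarrow> exec P H R \<Longrightarrow> exec (Try C P Q) G R"
| try_fail: "exec C G Fail \<Longrightarrow> exec Q G R \<Longrightarrow> exec (Try C P Q) G R"
| if_ok: "exec C G (Ok H) \<Longrightarrow> exec P G R \<Longrightarrow> exec (If C P Q) G R"
| if_fail: "exec C G Fail \<Longrightarrow> exec Q G R \<Longrightarrow> exec (If C P Q) G R"

text \<open>Termination: every execution of P on G is finite (no divergent computation).\<close>
inductive terminates :: "cmd \<Rightarrow> hgraph \<Rightarrow> bool" where
  "terminates (Call rs) G"
| "terminates Skip G"
| "terminates FailC G"
| "terminates P G \<Longrightarrow> (\<forall>H. exec P G (Ok H) \<longrightarrow> terminates Q H) \<Longrightarrow> terminates (Seq P Q) G"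
| "terminates P G \<Longrightarrow> (\<forall>H. exec P G (Ok H) \<longrightarrow> terminates (Loop P) H) \<Longrightarrow> terminates (Loop P) G"
| "terminates C G \<Longrightarrow> (\<forall>H. exec C G (Ok H) \<longrightarrow> terminates P H) \<Longrightarrow>
     (exec C G Fail \<longrightarrow> terminates Q G) \<Longrightarrow> terminates (Try C P Q) G"
| "terminates C G \<Longrightarrow> ((\<exists>H. exec C G (Ok H)) \<longrightarrow> terminates P G) \<Longrightarrow>
     (exec C G Fail \<longrightarrow> terminates Q G) \<Longrightarrow> terminates (If C P Q) G"

abbreviation R :: "rule \<Rightarrow> cmd" where "R r \<equiv> Call [r]"

definition Relax :: cmd where
  "Relax = Seq (R root1)
     (Try (R no_deg) Skip
        (Seq (Loop (Seq (R unmarked_edge)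
                        (Seq (Try (Call [unvisited, reduce]) Skip Skip) (R finish))))
             (R unroot1)))"

definition Clean :: cmd where
  "Clean = Seq (R root2) (Seq (Loop (R unmark_edge)) (R unroot2))"

definition Final :: cmd where
  "Final = Seq (Loop (Seq (R root1)
                   (Seq (Loop (Seq (R unmarked_edge) (Seq (If (R reduce) (R set_flag) Skip) (R finish))))
                        (R unroot1))))
           (Seq (If (R flag) FailC Skip)
                (Seq (R delete_counter) (Loop (R no_deg_inv))))"

definition bellman_ford :: cmd where
  "bellman_ford = Seq (R set_counter) (Seq (Loop (R count))
      (Seq (Loop (Seq (R decrement) (Seq (Loop Relax) (Loop Clean)))) Final))"

definition wt :: "hgraph \<Rightarrow> nat \<Rightarrow> int" where
  "wt G e = (case elab G e of [AInt w] \<Rightarrow> w | _ \<Rightarrow> 0)"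

fun walk :: "hgraph \<Rightarrow> nat \<Rightarrow> nat list \<Rightarrow> nat \<Rightarrow> bool" where
  "walk G u [] v = (u \<in> nodes G \<and> u = v)"
| "walk G u (e # es) v = (u \<in> nodes G \<and> e \<in> edges G \<and> src G e = u \<and> walk G (tgt G e) es v)"

definition dpath :: "hgraph \<Rightarrow> nat \<Rightarrow> nat list \<Rightarrow> nat \<Rightarrow> bool" where
  "dpath G u es v \<longleftrightarrow> walk G u es v \<and> distinct (u # map (tgt G) es)"

definition dcycle :: "hgraph \<Rightarrow> nat \<Rightarrow> nat list \<Rightarrow> bool" where
  "dcycle G u es \<longleftrightarrow> es \<noteq> [] \<and> walk G u es u \<and> distinct (map (tgt G) es)"

definition reachable :: "hgraph \<Rightarrow> nat \<Rightarrow> nat \<Rightarrow> bool" where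
  "reachable G r v \<longleftrightarrow> (\<exists>es. dpath G r es v)"

definition path_weight :: "hgraph \<Rightarrow> nat list \<Rightarrow> int" where
  "path_weight G es = sum_list (map (wt G) es)"

definition neg_cycle_reachable :: "hgraph \<Rightarrow> nat \<Rightarrow> bool" where
  "neg_cycle_reachable G r \<longleftrightarrow>
     (\<exists>u es. dcycle G u es \<and> path_weight G es < 0 \<and> reachable G r u)"

definition dist :: "hgraph \<Rightarrow> nat \<Rightarrow> nat \<Rightarrow> int" where
  "dist G r v = Min {path_weight G es | es. dpath G r es v}"

definition bf_output :: "hgraph \<Rightarrow> nat \<Rightarrow> hgraph" where
  "bf_output G r = G\<lparr>nlab := (\<lambda>v. if reachable G r v then nlab G v @ [AInt (dist G r v)]
                                    else nlab G v @ [AStr ''f'']),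
                     emark := (\<lambda>e. EBlue)\<rparr>"

end

theory Submission
  imports Defs
begin

text \<open>The host graph is tracked through an abstract state relative to the input graph, together
  with a distance estimate \<open>D\<close> that is read off the last entry of each node label.  Every round
  of the main loop visits each node once and relaxes all its outgoing edges, so after \<open>k\<close> rounds
  \<open>D v\<close> is at most the weight of every walk from \<open>r\<close> to \<open>v\<close> with at most \<open>k\<close> edges, while
  each finite estimate is the weight of some walk.  The counter node makes the loop run
  \<open>|V| - 1\<close> times, after which the final pass raises the flag iff some edge is still relaxable.
  If no edge is relaxable, the estimates form a potential on the nodes reachable from \<open>r\<close>, so
  no negative cycle is reachable; conversely, if none is reachable, shortcutting walks to paths
  shows that no edge is relaxable and that the estimates are the distances.  Every loop
  terminates because it decreases the counter or the number of nodes or edges with some mark.\<close>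

section \<open>Weakest preconditions for total correctness\<close>

definition wp :: "cmd \<Rightarrow> (result \<Rightarrow> bool) \<Rightarrow> hgraph \<Rightarrow> bool" where
  "wp c Q G \<longleftrightarrow> terminates c G \<and> (\<exists>Res. exec c G Res) \<and> (\<forall>Res. exec c G Res \<longrightarrow> Q Res)"

inductive_cases exec_CallE: "exec (Call rs) G Res"
inductive_cases exec_SkipE: "exec Skip G Res"
inductive_cases exec_FailE: "exec FailC G Res"
inductive_cases exec_SeqE: "exec (Seq P Q) G Res"
inductive_cases exec_LoopE: "exec (Loop P) G Res"
inductive_cases exec_TryE: "exec (Try C P Q) G Res"
inductive_cases exec_IfE: "exec (If C P Q) G Res"

lemma wp_mono: "wp c Q G \<Longrightarrow> (\<And>Res. Q Res \<Longrightarrow> Q' Res) \<Longrightarrow> wp c Q' G"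
  unfolding wp_def by blast

lemma wp_call:
  assumes "\<And>r H. r \<in> set rs \<Longrightarrow> apply_rule r G H \<Longrightarrow> M H"
    and "\<forall>r\<in>set rs. \<nexists>H. apply_rule r G H \<Longrightarrow> F"
  shows "wp (Call rs) (case_result M F) G"
  unfolding wp_def
proof (intro conjI)
  show "terminates (Call rs) G" by (rule terminates.intros)
  show "\<exists>Res. exec (Call rs) G Res"
    by (cases "\<exists>r\<in>set rs. \<exists>H. apply_rule r G H") (auto intro: exec.intros)
  show "\<forall>Res. exec (Call rs) G Res \<longrightarrow> case_result M F Res"
    using assms by (auto elim!: exec_CallE)
qed

lemma wp_rule:
  assumes "\<And>H. apply_rule r G H \<Longrightarrow> M H" and "\<nexists>H. apply_rule r G H \<Longrightarrow> F"
  shows "wp (R r) (case_result M F) G"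
  using assms by (intro wp_call) auto

lemma wp_skip: "Q (Ok G) \<Longrightarrow> wp Skip Q G"
  unfolding wp_def by (auto intro: exec.intros terminates.intros elim: exec_SkipE)

lemma wp_fail: "Q Fail \<Longrightarrow> wp FailC Q G"
  unfolding wp_def by (auto intro: exec.intros terminates.intros elim: exec_FailE)

lemma wp_seq:
  assumes c1: "wp c1 (case_result M F) G"
    and c2: "\<And>H. M H \<Longrightarrow> wp c2 Q H"
    and fail: "F \<Longrightarrow> Q Fail"
  shows "wp (Seq c1 c2) Q G"
proof -
  have c1': "terminates c1 G" "\<exists>Res. exec c1 G Res" "\<And>Res. exec c1 G Res \<Longrightarrow> case_result M F Res"
    using c1 unfolding wp_def by blast+
  have c2': "terminates c2 H" "\<exists>Res. exec c2 H Res" "\<And>Res. exec c2 H Res \<Longrightarrow> Q Res"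
    if "exec c1 G (Ok H)" for H
    using c2[OF c1'(3)[OF that, simplified]] unfolding wp_def by blast+
  have "terminates (Seq c1 c2) G"
    using c1'(1) c2'(1) by (blast intro: terminates.intros)
  moreover have "\<exists>Res. exec (Seq c1 c2) G Res"
  proof -
    obtain Res where Res: "exec c1 G Res" using c1'(2) by blast
    then show ?thesis
      by (cases Res) (use c2'(2) in \<open>blast intro: exec.intros\<close>)+
  qed
  moreover have "Q Res" if "exec (Seq c1 c2) G Res" for Res
    using that by (rule exec_SeqE) (use c1'(3)[of Fail] c2'(3) fail in auto)
  ultimately show ?thesis unfolding wp_def by blast
qed

lemma wp_try:
  assumes C: "wp C (case_result M F) G"
    and ok: "\<And>H. M H \<Longrightarrow> wp P Q H"
    and fail: "F \<Longrightarrow> wp P' Q G"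
  shows "wp (Try C P P') Q G"
proof -
  have C': "terminates C G" "\<exists>Res. exec C G Res" "\<And>Res. exec C G Res \<Longrightarrow> case_result M F Res"
    using C unfolding wp_def by blast+
  have ok': "terminates P H" "\<exists>Res. exec P H Res" "\<And>Res. exec P H Res \<Longrightarrow> Q Res"
    if "exec C G (Ok H)" for H
    using ok[OF C'(3)[OF that, simplified]] unfolding wp_def by blast+
  have fail': "terminates P' G" "\<exists>Res. exec P' G Res" "\<And>Res. exec P' G Res \<Longrightarrow> Q Res"
    if "exec C G Fail"
    using fail[OF C'(3)[OF that, simplified]] unfolding wp_def by blast+
  have "terminates (Try C P P') G"
    using C'(1) ok'(1) fail'(1) by (blast intro: terminates.intros)
  moreover have "\<exists>Res. exec (Try C P P') G Res"
  proof -
    obtain Res where Res: "exec C G Res" using C'(2) by blast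
    then show ?thesis
      by (cases Res) (use ok'(2) fail'(2) in \<open>blast intro: exec.intros\<close>)+
  qed
  moreover have "Q Res" if "exec (Try C P P') G Res" for Res
    using that by (rule exec_TryE) (use ok'(3) fail'(3) in auto)
  ultimately show ?thesis unfolding wp_def by blast
qed

lemma wp_if:
  assumes C: "wp C (case_result (\<lambda>_. T) F) G"
    and ok: "T \<Longrightarrow> wp P Q G"
    and fail: "F \<Longrightarrow> wp P' Q G"
  shows "wp (If C P P') Q G"
proof -
  have C': "terminates C G" "\<exists>Res. exec C G Res" "\<And>Res. exec C G Res \<Longrightarrow> case_result (\<lambda>_. T) F Res"
    using C unfolding wp_def by blast+
  have ok': "terminates P G" "\<exists>Res. exec P G Res" "\<And>Res. exec P G Res \<Longrightarrow> Q Res"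
    if "exec C G (Ok H)" for H
    using ok[OF C'(3)[OF that, simplified]] unfolding wp_def by blast+
  have fail': "terminates P' G" "\<exists>Res. exec P' G Res" "\<And>Res. exec P' G Res \<Longrightarrow> Q Res"
    if "exec C G Fail"
    using fail[OF C'(3)[OF that, simplified]] unfolding wp_def by blast+
  have "terminates (If C P P') G"
    using C'(1) ok'(1) fail'(1) by (blast intro: terminates.intros)
  moreover have "\<exists>Res. exec (If C P P') G Res"
  proof -
    obtain Res where Res: "exec C G Res" using C'(2) by blast
    then show ?thesis
      by (cases Res) (use ok'(2) fail'(2) in \<open>blast intro: exec.intros\<close>)+
  qed
  moreover have "Q Res" if "exec (If C P P') G Res" for Res
    using that by (rule exec_IfE) (use ok'(3) fail'(3) in auto)
  ultimately show ?thesis unfolding wp_def by blast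
qed

lemma wp_loop:
  fixes I :: "'a \<Rightarrow> hgraph \<Rightarrow> bool" and \<mu> :: "'a \<Rightarrow> nat"
  assumes start: "I a G"
    and body: "\<And>a G. I a G \<Longrightarrow>
      wp c (case_result (\<lambda>H. \<exists>a'. I a' H \<and> \<mu> a' < \<mu> a) (X a G)) G"
  shows "wp (Loop c) (case_result (\<lambda>H. \<exists>a. I a H \<and> X a H) False) G"
  using start
proof (induction "\<mu> a" arbitrary: a G rule: less_induct)
  case less
  have c: "terminates c G" "\<exists>Res. exec c G Res"
    "\<And>Res. exec c G Res \<Longrightarrow> case_result (\<lambda>H. \<exists>a'. I a' H \<and> \<mu> a' < \<mu> a) (X a G) Res"
    using body[OF less.prems] unfolding wp_def by blast+
  have step: "wp (Loop c) (case_result (\<lambda>H. \<exists>a. I a H \<and> X a H) False) H" if "exec c G (Ok H)" for H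
    using c(3)[OF that] less.hyps by auto
  have "terminates (Loop c) G"
    using c(1) step unfolding wp_def by (blast intro: terminates.intros)
  moreover have "\<exists>Res. exec (Loop c) G Res"
  proof -
    obtain Res where Res: "exec c G Res" using c(2) by blast
    then show ?thesis
      by (cases Res) (use step in \<open>unfold wp_def, blast intro: exec.intros\<close>)+
  qed
  moreover have "case_result (\<lambda>H. \<exists>a. I a H \<and> X a H) False Res" if "exec (Loop c) G Res" for Res
    using that by (rule exec_LoopE) (use step c(3)[of Fail] less.prems in \<open>auto simp: wp_def\<close>)
  ultimately show ?case unfolding wp_def by blast
qed

lemma card_update_less:
  assumes "finite S" "x \<in> S" "f x = a" "b \<noteq> a"
  shows "card {y\<in>S. (f(x := b)) y = a} < card {y\<in>S. f y = a}"
proof -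
  have "{y\<in>S. (f(x := b)) y = a} = {y\<in>S. f y = a} - {x}" using assms by auto
  moreover have "card ({y\<in>S. f y = a} - {x}) < card {y\<in>S. f y = a}"
    by (rule card_Diff1_less) (use assms in auto)
  ultimately show ?thesis by simp
qed

section \<open>Walks and paths\<close>

lemma walk_start: "walk G u es v \<Longrightarrow> u \<in> nodes G"
  by (cases es) auto

lemma walk_end: "walk G u es v \<Longrightarrow> v \<in> nodes G"
  by (induction es arbitrary: u) auto

lemma walk_append: "walk G u (xs @ ys) v \<longleftrightarrow> (\<exists>m. walk G u xs m \<and> walk G m ys v)"
  by (induction xs arbitrary: u) (auto dest: walk_start)

lemma walk_snoc:
  "walk G u (xs @ [e]) v \<longleftrightarrow> walk G u xs (src G e) \<and> e \<in> edges G \<and> tgt G e = v \<and> v \<in> nodes G"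
  unfolding walk_append by (auto dest: walk_end)

lemma walk_nodes: "walk G u es v \<Longrightarrow> set (u # map (tgt G) es) \<subseteq> nodes G"
  by (induction es arbitrary: u) (auto dest: walk_start)

lemma walk_edges: "walk G u es v \<Longrightarrow> set es \<subseteq> edges G"
  by (induction es arbitrary: u) auto

lemma walk_split:
  assumes "walk G u es v" and "e \<in> set es"
  obtains a b where "es = a @ e # b" "walk G u a (src G e)" "walk G (tgt G e) b v"
proof -
  obtain a b where es: "es = a @ e # b" using split_list[OF assms(2)] by blast
  with assms(1) show thesis by (auto simp: walk_append intro: that)
qed

lemma path_weight_Nil [simp]: "path_weight G [] = 0"
  and path_weight_Cons [simp]: "path_weight G (e # es) = wt G e + path_weight G es"
  and path_weight_append [simp]: "path_weight G (xs @ ys) = path_weight G xs + path_weight G ys"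
  unfolding path_weight_def by simp_all

lemma potential_walk_le:
  "walk G u es v \<Longrightarrow> \<forall>e\<in>set es. h (tgt G e) \<le> h (src G e) + wt G e \<Longrightarrow>
    h v \<le> h u + path_weight G es"
proof (induction es arbitrary: u)
  case (Cons e es)
  then have "h v \<le> h (tgt G e) + path_weight G es" and "h (tgt G e) \<le> h u + wt G e" by auto
  then show ?case by simp
qed simp

lemma dpath_length:
  assumes "finite (nodes G)" and "dpath G u es v"
  shows "length es < card (nodes G)"
proof -
  have "card (set (u # map (tgt G) es)) \<le> card (nodes G)"
    using assms walk_nodes unfolding dpath_def by (blast intro: card_mono)
  moreover have "card (set (u # map (tgt G) es)) = length es + 1"
    using assms(2) distinct_card unfolding dpath_def by fastforce
  ultimately show ?thesis by simp
qed

lemma finite_dpaths: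
  assumes "finite (edges G)"
  shows "finite {es. dpath G u es v}"
proof (rule finite_subset[OF _ finite_subset_distinct[OF assms]])
  show "{es. dpath G u es v} \<subseteq> {xs. set xs \<subseteq> edges G \<and> distinct xs}"
    unfolding dpath_def by (auto dest: walk_edges simp: distinct_map)
qed

lemma dpath_split_at:
  "dpath G u p z \<Longrightarrow> y \<in> set (u # map (tgt G) p) \<Longrightarrow>
   \<exists>p1 p2. p = p1 @ p2 \<and> dpath G u p1 y \<and> walk G y p2 z \<and>
     y \<notin> set (map (tgt G) p2) \<and> distinct (map (tgt G) p2)"
proof (induction p arbitrary: u)
  case Nil
  then show ?case unfolding dpath_def by auto
next
  case (Cons e p)
  show ?case
  proof (cases "y = u")
    case True
    then show ?thesis using Cons.prems unfolding dpath_def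
      by (intro exI[of _ "[]"] exI[of _ "e # p"]) auto
  next
    case False
    then have y: "y \<in> set (tgt G e # map (tgt G) p)" using Cons.prems by auto
    have "dpath G (tgt G e) p z" using Cons.prems(1) unfolding dpath_def by auto
    from Cons.IH[OF this y] obtain p1 p2 where p: "p = p1 @ p2" "dpath G (tgt G e) p1 y"
      "walk G y p2 z" "y \<notin> set (map (tgt G) p2)" "distinct (map (tgt G) p2)"
      by blast
    have "dpath G u (e # p1) y"
      using Cons.prems(1) p(1,2) unfolding dpath_def by auto
    then show ?thesis using p by (intro exI[of _ "e # p1"] exI[of _ p2]) auto
  qed
qed

text \<open>The path is built edge by edge; when the next edge returns to a node already on it, the
  closed sub-walk cut off there is either non-negative or a negative cycle reachable from \<open>u\<close>.\<close>
lemma walk_to_dpath: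
  "walk G u es v \<Longrightarrow>
    \<exists>es'. dpath G u es' v \<and> (path_weight G es' \<le> path_weight G es \<or> neg_cycle_reachable G u)"
proof (induction es arbitrary: v rule: rev_induct)
  case Nil
  then show ?case unfolding dpath_def by (intro exI[of _ "[]"]) auto
next
  case (snoc e es)
  have w: "walk G u es (src G e)" "e \<in> edges G" "tgt G e = v" "v \<in> nodes G"
    using snoc.prems by (simp_all add: walk_snoc)
  obtain p where p: "dpath G u p (src G e)"
    "path_weight G p \<le> path_weight G es \<or> neg_cycle_reachable G u"
    using snoc.IH[OF w(1)] by blast
  show ?case
  proof (cases "v \<in> set (u # map (tgt G) p)")
    case False
    have "dpath G u (p @ [e]) v"
      using p(1) w False unfolding dpath_def by (auto simp: walk_snoc)
    then show ?thesis using p(2) by (intro exI[of _ "p @ [e]"]) auto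
  next
    case True
    obtain p1 p2 where p12: "p = p1 @ p2" "dpath G u p1 v" "walk G v p2 (src G e)"
      "v \<notin> set (map (tgt G) p2)" "distinct (map (tgt G) p2)"
      using dpath_split_at[OF p(1) True] by blast
    have cycle: "dcycle G v (p2 @ [e])"
      unfolding dcycle_def using p12(3-5) w by (auto simp: walk_snoc)
    have "path_weight G p1 \<le> path_weight G (es @ [e]) \<or> neg_cycle_reachable G u"
    proof (cases "path_weight G (p2 @ [e]) < 0")
      case True
      then show ?thesis
        unfolding neg_cycle_reachable_def reachable_def using cycle p12(2) by blast
    qed (use p(2) p12(1) in auto)
    then show ?thesis using p12(2) by blast
  qed
qed

section \<open>Distance estimates\<close>

text \<open>An estimate \<open>None\<close> stands for an infinite distance.\<close>
type_synonym estimate = "nat \<Rightarrow> int option"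

locale rooted_graph =
  fixes G0 :: hgraph and r :: nat
  assumes wf: "wf_hgraph G0" and root_node: "r \<in> nodes G0"
begin

abbreviation "V \<equiv> nodes G0"
abbreviation "E \<equiv> edges G0"
abbreviation "rounds \<equiv> card V - 1"

lemma finite_V: "finite V" and finite_E: "finite E"
  using wf unfolding wf_hgraph_def by auto

lemma edge_ends: "e \<in> E \<Longrightarrow> src G0 e \<in> V" "e \<in> E \<Longrightarrow> tgt G0 e \<in> V"
  using wf unfolding wf_hgraph_def by auto

definition walk_bound :: "nat \<Rightarrow> estimate \<Rightarrow> bool" where
  "walk_bound k D \<longleftrightarrow>
    (\<forall>v es. walk G0 r es v \<and> length es \<le> k \<longrightarrow> (\<exists>t. D v = Some t \<and> t \<le> path_weight G0 es))"

definition walk_realised :: "estimate \<Rightarrow> bool" where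
  "walk_realised D \<longleftrightarrow> (\<forall>v t. D v = Some t \<longrightarrow> (\<exists>es. walk G0 r es v \<and> path_weight G0 es = t))"

definition edge_bound :: "nat \<Rightarrow> estimate \<Rightarrow> nat \<Rightarrow> bool" where
  "edge_bound k D e \<longleftrightarrow> (\<forall>es. walk G0 r es (src G0 e) \<and> length es \<le> k \<longrightarrow>
      (\<exists>t. D (tgt G0 e) = Some t \<and> t \<le> path_weight G0 es + wt G0 e))"

definition est_le :: "estimate \<Rightarrow> estimate \<Rightarrow> bool" where
  "est_le D' D \<longleftrightarrow> (\<forall>v t. D v = Some t \<longrightarrow> (\<exists>s. D' v = Some s \<and> s \<le> t))"

definition relaxable :: "estimate \<Rightarrow> nat \<Rightarrow> bool" where
  "relaxable D e \<longleftrightarrow> (\<exists>s t. D (src G0 e) = Some s \<and> D (tgt G0 e) = Some t \<and> s + wt G0 e < t)"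

definition init_est :: estimate where
  "init_est = (\<lambda>v. if v = r then Some 0 else None)"

lemma walk_bound_init: "walk_bound 0 init_est"
  unfolding walk_bound_def init_est_def by auto

lemma walk_realised_init: "walk_realised init_est"
  unfolding walk_realised_def init_est_def using root_node by (auto intro!: exI[of _ "[]"])

lemma walk_bound_mono: "walk_bound k D \<Longrightarrow> est_le D' D \<Longrightarrow> walk_bound k D'"
  unfolding walk_bound_def est_le_def by (meson order_trans)

lemma edge_bound_mono: "edge_bound k D e \<Longrightarrow> est_le D' D \<Longrightarrow> edge_bound k D' e"
  unfolding edge_bound_def est_le_def by (meson order_trans)

lemma est_le_update:
  "D u = None \<or> (\<exists>t. D u = Some t \<and> i < t) \<Longrightarrow> est_le (D(u := Some i)) D"
  unfolding est_le_def by auto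

lemma walk_realised_update:
  assumes "walk_realised D" and "e \<in> E" and "D (src G0 e) = Some s"
  shows "walk_realised (D(tgt G0 e := Some (s + wt G0 e)))"
  unfolding walk_realised_def
proof (intro allI impI)
  fix v t assume t: "(D(tgt G0 e := Some (s + wt G0 e))) v = Some t"
  show "\<exists>es. walk G0 r es v \<and> path_weight G0 es = t"
  proof (cases "v = tgt G0 e")
    case True
    obtain es where "walk G0 r es (src G0 e)" "path_weight G0 es = s"
      using assms unfolding walk_realised_def by blast
    then show ?thesis
      using True t assms(2) edge_ends[OF assms(2)] by (intro exI[of _ "es @ [e]"]) (auto simp: walk_snoc)
  qed (use assms(1) t in \<open>auto simp: walk_realised_def\<close>)
qed

lemma edge_boundI:
  assumes "walk_bound k D"
    and "\<And>s. D (src G0 e) = Some s \<Longrightarrow> \<exists>t. D (tgt G0 e) = Some t \<and> t \<le> s + wt G0 e"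
  shows "edge_bound k D e"
  unfolding edge_bound_def
proof (intro allI impI)
  fix es assume "walk G0 r es (src G0 e) \<and> length es \<le> k"
  then obtain s where "D (src G0 e) = Some s" "s \<le> path_weight G0 es"
    using assms(1) unfolding walk_bound_def by blast
  then show "\<exists>t. D (tgt G0 e) = Some t \<and> t \<le> path_weight G0 es + wt G0 e"
    using assms(2) by force
qed

lemma walk_bound_Suc:
  assumes "walk_bound k D" and "\<forall>e\<in>E. edge_bound k D e"
  shows "walk_bound (Suc k) D"
  unfolding walk_bound_def
proof (intro allI impI)
  fix v es assume es: "walk G0 r es v \<and> length es \<le> Suc k"
  show "\<exists>t. D v = Some t \<and> t \<le> path_weight G0 es"
  proof (cases "length es \<le> k")
    case False
    then obtain es' e where es': "es = es' @ [e]" by (cases es rule: rev_cases) auto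
    then have "walk G0 r es' (src G0 e)" "e \<in> E" "tgt G0 e = v" "length es' \<le> k"
      using es False by (auto simp: walk_snoc)
    then obtain t where "D v = Some t" "t \<le> path_weight G0 es' + wt G0 e"
      using assms(2) unfolding edge_bound_def by blast
    then show ?thesis using es' by simp
  qed (use assms(1) es in \<open>auto simp: walk_bound_def\<close>)
qed

lemma walk_bound_reachable:
  assumes "walk_bound rounds D" and "walk G0 r es v"
  obtains t where "D v = Some t"
proof -
  obtain es' where "dpath G0 r es' v" using walk_to_dpath[OF assms(2)] by blast
  moreover from this have "length es' \<le> rounds" using dpath_length[OF finite_V] by fastforce
  ultimately show thesis using assms(1) that unfolding walk_bound_def dpath_def by blast
qed

text \<open>If no edge is relaxable, the estimates form a potential; summing the triangle inequalities
  around the cycle shows that its weight is non-negative.\<close>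
lemma neg_cycle_relaxable:
  assumes bound: "walk_bound rounds D" and neg: "neg_cycle_reachable G0 r"
  shows "\<exists>e\<in>E. relaxable D e"
proof (rule ccontr)
  assume none: "\<not> (\<exists>e\<in>E. relaxable D e)"
  obtain x cs p where "dcycle G0 x cs" "path_weight G0 cs < 0" "dpath G0 r p x"
    using neg unfolding neg_cycle_reachable_def reachable_def by blast
  then have cycle: "walk G0 x cs x" "path_weight G0 cs < 0" and path: "walk G0 r p x"
    unfolding dcycle_def dpath_def by blast+
  let ?h = "\<lambda>y. the (D y)"
  have triangle: "?h (tgt G0 e) \<le> ?h (src G0 e) + wt G0 e" if e: "e \<in> set cs" for e
  proof -
    have eE: "e \<in> E" using walk_edges[OF cycle(1)] e by auto
    obtain a b where "walk G0 x a (src G0 e)" using walk_split[OF cycle(1) e] by blast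
    then have w: "walk G0 r (p @ a) (src G0 e)" "walk G0 r (p @ a @ [e]) (tgt G0 e)"
      using path eE edge_ends[OF eE] by (auto simp: walk_append walk_snoc)
    obtain s where s: "D (src G0 e) = Some s" using walk_bound_reachable[OF bound w(1)] .
    obtain t where t: "D (tgt G0 e) = Some t" using walk_bound_reachable[OF bound w(2)] .
    have "\<not> s + wt G0 e < t" using none eE s t unfolding relaxable_def by blast
    then show ?thesis using s t by simp
  qed
  have "?h x \<le> ?h x + path_weight G0 cs"
    by (rule potential_walk_le[OF cycle(1)]) (use triangle in blast)
  then show False using cycle(2) by simp
qed

lemma not_relaxable:
  assumes bound: "walk_bound rounds D" and real: "walk_realised D"
    and no_neg: "\<not> neg_cycle_reachable G0 r" and "e \<in> E"
  shows "\<not> relaxable D e"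
proof
  assume "relaxable D e"
  then obtain s t where st: "D (src G0 e) = Some s" "D (tgt G0 e) = Some t" "s + wt G0 e < t"
    unfolding relaxable_def by blast
  obtain es where es: "walk G0 r es (src G0 e)" "path_weight G0 es = s"
    using real st(1) unfolding walk_realised_def by blast
  have "walk G0 r (es @ [e]) (tgt G0 e)" using es(1) \<open>e \<in> E\<close> edge_ends by (simp add: walk_snoc)
  then obtain p where p: "dpath G0 r p (tgt G0 e)" "path_weight G0 p \<le> s + wt G0 e"
    using walk_to_dpath no_neg es(2) by fastforce
  have "length p \<le> rounds" using dpath_length[OF finite_V p(1)] by simp
  then have "t \<le> path_weight G0 p" using bound p(1) st(2) unfolding walk_bound_def dpath_def by fastforce
  then show False using p(2) st(3) by simp
qed

lemma est_eq_dist: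
  assumes bound: "walk_bound rounds D" and real: "walk_realised D"
    and no_neg: "\<not> neg_cycle_reachable G0 r"
  shows "D v = (if reachable G0 r v then Some (dist G0 r v) else None)"
proof (cases "reachable G0 r v")
  case True
  then obtain p where "dpath G0 r p v" unfolding reachable_def by blast
  then obtain t where t: "D v = Some t"
    using walk_bound_reachable[OF bound] unfolding dpath_def by blast
  obtain es where "walk G0 r es v" "path_weight G0 es = t"
    using real t unfolding walk_realised_def by blast
  then obtain q where q: "dpath G0 r q v" "path_weight G0 q \<le> t"
    using walk_to_dpath no_neg by fastforce
  have le: "t \<le> path_weight G0 q'" if q': "dpath G0 r q' v" for q'
  proof -
    have "length q' \<le> rounds" using dpath_length[OF finite_V q'] by simp
    then show ?thesis using bound q' t unfolding walk_bound_def dpath_def by fastforce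
  qed
  have "t = path_weight G0 q" using le[OF q(1)] q(2) by simp
  moreover have "finite {path_weight G0 es | es. dpath G0 r es v}"
    using finite_dpaths[OF finite_E, of r v] by (simp add: setcompr_eq_image)
  ultimately have "dist G0 r v = t"
    unfolding dist_def using le q(1) by (intro Min_eqI) auto
  then show ?thesis using True t by simp
next
  case False
  have "D v = None"
  proof (rule ccontr)
    assume "D v \<noteq> None"
    then obtain es where "walk G0 r es v" using real unfolding walk_realised_def by blast
    then show False using False walk_to_dpath unfolding reachable_def by blast
  qed
  then show ?thesis using False by simp
qed

end

section \<open>Program states\<close>

fun est_atom :: "int option \<Rightarrow> atom" where
  "est_atom None = AStr ''f''"
| "est_atom (Some i) = AInt i"

text \<open>Program states are described relative to the input graph: input node \<open>v\<close> sits at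
  node \<open>place A v\<close> of the host graph (only \<open>no_deg\<close> moves nodes, and only isolated ones) and
  carries label \<open>lab A v\<close>; in \<open>repr c d A H\<close> below, \<open>c\<close> is the green counter node and \<open>d\<close> its
  dashed edge to \<open>r\<close>.\<close>
record astate =
  place :: "nat \<Rightarrow> nat"
  lab :: "nat \<Rightarrow> label"
  mark :: "nat \<Rightarrow> nmark"
  rooted :: "nat \<Rightarrow> bool"
  edge_mark :: "nat \<Rightarrow> emark"
  counter :: int

locale bf_input = rooted_graph +
  assumes all_grey: "\<forall>v\<in>V. nmark G0 v = NGrey"
    and root_flag: "isroot G0 r" and input_sole_root: "\<forall>v\<in>V. isroot G0 v \<longrightarrow> v = r"
    and input_unmarked: "\<forall>e\<in>E. emark G0 e = EUnmarked"
    and weight_labels: "\<forall>e\<in>E. \<exists>w. elab G0 e = [AInt w]"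
    and no_loops: "\<forall>e\<in>E. src G0 e \<noteq> tgt G0 e"
begin

definition isolated :: "nat set" where
  "isolated = {v\<in>V. v \<noteq> r \<and> (\<forall>e\<in>E. src G0 e \<noteq> v \<and> tgt G0 e \<noteq> v)}"

lemma edge_ends_not_isolated: "e \<in> E \<Longrightarrow> src G0 e \<notin> isolated" "e \<in> E \<Longrightarrow> tgt G0 e \<notin> isolated"
  unfolding isolated_def by auto

lemma root_not_isolated: "r \<notin> isolated"
  unfolding isolated_def by auto

lemma elab_weight: "e \<in> E \<Longrightarrow> elab G0 e = [AInt (wt G0 e)]"
  using weight_labels unfolding wt_def by fastforce

definition repr :: "nat \<Rightarrow> nat \<Rightarrow> astate \<Rightarrow> hgraph \<Rightarrow> bool" where
  "repr c d A H \<longleftrightarrow> nodes H = insert c (place A ` V) \<and> c \<notin> place A ` V \<and> inj_on (place A) V \<and>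
     (\<forall>v\<in>V. v \<notin> isolated \<longrightarrow> place A v = v) \<and>
     edges H = insert d E \<and> d \<notin> E \<and>
     (\<forall>e\<in>E. src H e = src G0 e \<and> tgt H e = tgt G0 e \<and> elab H e = elab G0 e \<and> emark H e = edge_mark A e) \<and>
     src H d = c \<and> tgt H d = r \<and> emark H d = EDashed \<and>
     nlab H c = [AInt (counter A)] \<and> nmark H c = NGreen \<and> \<not> isroot H c \<and>
     (\<forall>v\<in>V. nlab H (place A v) = lab A v \<and> nmark H (place A v) = mark A v \<and>
        isroot H (place A v) = rooted A v \<and> mark A v \<noteq> NGreen)"

definition repr_final :: "astate \<Rightarrow> hgraph \<Rightarrow> bool" where
  "repr_final A H \<longleftrightarrow> nodes H = place A ` V \<and> inj_on (place A) V \<and>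
     (\<forall>v\<in>V. v \<notin> isolated \<longrightarrow> place A v = v) \<and> edges H = E \<and>
     (\<forall>e\<in>E. src H e = src G0 e \<and> tgt H e = tgt G0 e \<and> elab H e = elab G0 e \<and> emark H e = edge_mark A e) \<and>
     (\<forall>v\<in>V. nlab H (place A v) = lab A v \<and> nmark H (place A v) = mark A v \<and> isroot H (place A v) = rooted A v)"

lemma repr_place_fixed: "repr c d A H \<Longrightarrow> v \<in> V \<Longrightarrow> v \<notin> isolated \<Longrightarrow> place A v = v"
  unfolding repr_def by blast

lemma repr_place_src: "repr c d A H \<Longrightarrow> e \<in> E \<Longrightarrow> place A (src G0 e) = src G0 e"
  and repr_place_tgt: "repr c d A H \<Longrightarrow> e \<in> E \<Longrightarrow> place A (tgt G0 e) = tgt G0 e"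
  and repr_place_root: "repr c d A H \<Longrightarrow> place A r = r"
  using repr_place_fixed edge_ends edge_ends_not_isolated root_not_isolated root_node by auto

lemma repr_node: "repr c d A H \<Longrightarrow> n \<in> nodes H \<Longrightarrow> nmark H n \<noteq> NGreen \<Longrightarrow> \<exists>v\<in>V. n = place A v"
  unfolding repr_def by auto

lemma repr_green: "repr c d A H \<Longrightarrow> n \<in> nodes H \<Longrightarrow> nmark H n = NGreen \<Longrightarrow> n = c"
  unfolding repr_def by auto

lemma repr_place_eq_iff: "repr c d A H \<Longrightarrow> u \<in> V \<Longrightarrow> v \<in> V \<Longrightarrow> place A u = place A v \<longleftrightarrow> u = v"
  unfolding repr_def by (meson inj_on_eq_iff)

lemma repr_place_ne_counter: "repr c d A H \<Longrightarrow> v \<in> V \<Longrightarrow> place A v \<noteq> c"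
  unfolding repr_def by auto

lemma repr_input_edge:
  assumes repr: "repr c d A H" and e: "e \<in> E"
  shows "e \<in> edges H" "src H e = src G0 e" "tgt H e = tgt G0 e" "src G0 e \<in> nodes H" "tgt G0 e \<in> nodes H"
    "src G0 e \<noteq> tgt G0 e" "elab H e = [AInt (wt G0 e)]" "emark H e = edge_mark A e"
    "nmark H (src G0 e) = mark A (src G0 e)" "isroot H (src G0 e) = rooted A (src G0 e)"
    "nlab H (src G0 e) = lab A (src G0 e)" "nlab H (tgt G0 e) = lab A (tgt G0 e)"
proof -
  have places: "place A (src G0 e) = src G0 e" "place A (tgt G0 e) = tgt G0 e"
    using repr_place_src[OF repr e] repr_place_tgt[OF repr e] .
  have nodes: "\<forall>v\<in>V. nlab H (place A v) = lab A v \<and> nmark H (place A v) = mark A v \<and>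
      isroot H (place A v) = rooted A v" and "nodes H = insert c (place A ` V)"
    using repr unfolding repr_def by blast+
  then show "src G0 e \<in> nodes H" "tgt G0 e \<in> nodes H"
    using places edge_ends[OF e] by (metis image_eqI insertI2)+
  show "nmark H (src G0 e) = mark A (src G0 e)" "isroot H (src G0 e) = rooted A (src G0 e)"
    "nlab H (src G0 e) = lab A (src G0 e)" "nlab H (tgt G0 e) = lab A (tgt G0 e)"
    using nodes places edge_ends[OF e] by metis+
  show "e \<in> edges H" "src H e = src G0 e" "tgt H e = tgt G0 e" "elab H e = [AInt (wt G0 e)]"
    "emark H e = edge_mark A e"
    using repr e elab_weight[OF e] unfolding repr_def by auto
  show "src G0 e \<noteq> tgt G0 e" using no_loops e by blast
qed

lemma repr_host_edge:
  assumes "repr c d A H" and "e \<in> edges H" "emark H e \<noteq> EDashed"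
  shows "e \<in> E"
  using assms unfolding repr_def by auto

lemma repr_root1:
  assumes repr: "repr c d A H" and "apply_rule root1 H H'"
  shows "\<exists>v\<in>V. mark A v = NBlue \<and> repr c d (A\<lparr>rooted := (rooted A)(v := True)\<rparr>) H'"
proof -
  obtain n where n: "n \<in> nodes H" "nmark H n = NBlue" and H': "H' = H\<lparr>isroot := (isroot H)(n := True)\<rparr>"
    using assms(2) by auto
  obtain v where v: "v \<in> V" "n = place A v" using repr_node[OF repr n(1)] n by auto
  have "mark A v = NBlue" using repr v n unfolding repr_def by auto
  moreover have "repr c d (A\<lparr>rooted := (rooted A)(v := True)\<rparr>) H'"
    using repr v repr_place_eq_iff[OF repr] repr_place_ne_counter[OF repr] unfolding repr_def H' by auto
  ultimately show ?thesis using v by blast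
qed

lemma root1_applicable: "repr c d A H \<Longrightarrow> v \<in> V \<Longrightarrow> mark A v = NBlue \<Longrightarrow> \<exists>H'. apply_rule root1 H H'"
  unfolding repr_def by auto

lemma repr_unroot1:
  assumes repr: "repr c d A H" and "apply_rule unroot1 H H'"
  shows "\<exists>v\<in>V. mark A v = NBlue \<and> rooted A v \<and>
     repr c d (A\<lparr>mark := (mark A)(v := NGrey), rooted := (rooted A)(v := False)\<rparr>) H'"
proof -
  obtain n where n: "n \<in> nodes H" "nmark H n = NBlue" "isroot H n"
    and H': "H' = H\<lparr>nmark := (nmark H)(n := NGrey), isroot := (isroot H)(n := False)\<rparr>"
    using assms(2) by auto
  obtain v where v: "v \<in> V" "n = place A v" using repr_node[OF repr n(1)] n by auto
  have "mark A v = NBlue" "rooted A v" using repr v n unfolding repr_def by auto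
  moreover have "repr c d (A\<lparr>mark := (mark A)(v := NGrey), rooted := (rooted A)(v := False)\<rparr>) H'"
    using repr v repr_place_eq_iff[OF repr] repr_place_ne_counter[OF repr] unfolding repr_def H' by auto
  ultimately show ?thesis using v by blast
qed

lemma unroot1_applicable:
  "repr c d A H \<Longrightarrow> v \<in> V \<Longrightarrow> mark A v = NBlue \<Longrightarrow> rooted A v \<Longrightarrow> \<exists>H'. apply_rule unroot1 H H'"
  unfolding repr_def by auto

lemma repr_root2:
  assumes repr: "repr c d A H" and "apply_rule root2 H H'"
  shows "\<exists>v\<in>V. mark A v = NGrey \<and>
     repr c d (A\<lparr>mark := (mark A)(v := NBlue), rooted := (rooted A)(v := True)\<rparr>) H'"
proof -
  obtain n where n: "n \<in> nodes H" "nmark H n = NGrey"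
    and H': "H' = H\<lparr>nmark := (nmark H)(n := NBlue), isroot := (isroot H)(n := True)\<rparr>"
    using assms(2) by auto
  obtain v where v: "v \<in> V" "n = place A v" using repr_node[OF repr n(1)] n by auto
  have "mark A v = NGrey" using repr v n unfolding repr_def by auto
  moreover have "repr c d (A\<lparr>mark := (mark A)(v := NBlue), rooted := (rooted A)(v := True)\<rparr>) H'"
    using repr v repr_place_eq_iff[OF repr] repr_place_ne_counter[OF repr] unfolding repr_def H' by auto
  ultimately show ?thesis using v by blast
qed

lemma root2_applicable: "repr c d A H \<Longrightarrow> v \<in> V \<Longrightarrow> mark A v = NGrey \<Longrightarrow> \<exists>H'. apply_rule root2 H H'"
  unfolding repr_def by auto

lemma repr_unroot2:
  assumes repr: "repr c d A H" and "apply_rule unroot2 H H'"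
  shows "\<exists>v\<in>V. mark A v = NBlue \<and> rooted A v \<and> repr c d (A\<lparr>rooted := (rooted A)(v := False)\<rparr>) H'"
proof -
  obtain n where n: "n \<in> nodes H" "nmark H n = NBlue" "isroot H n"
    and H': "H' = H\<lparr>isroot := (isroot H)(n := False)\<rparr>"
    using assms(2) by auto
  obtain v where v: "v \<in> V" "n = place A v" using repr_node[OF repr n(1)] n by auto
  have "mark A v = NBlue" "rooted A v" using repr v n unfolding repr_def by auto
  moreover have "repr c d (A\<lparr>rooted := (rooted A)(v := False)\<rparr>) H'"
    using repr v repr_place_eq_iff[OF repr] repr_place_ne_counter[OF repr] unfolding repr_def H' by auto
  ultimately show ?thesis using v by blast
qed

lemma unroot2_applicable:
  "repr c d A H \<Longrightarrow> v \<in> V \<Longrightarrow> mark A v = NBlue \<Longrightarrow> rooted A v \<Longrightarrow> \<exists>H'. apply_rule unroot2 H H'"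
  unfolding repr_def by auto

lemma repr_count:
  assumes repr: "repr c d A H" and "apply_rule count H H'"
  shows "\<exists>v\<in>V. mark A v = NGrey \<and> repr c d (A\<lparr>lab := (lab A)(v := lab A v @ [AStr ''f'']),
     mark := (mark A)(v := NBlue), counter := counter A + 1\<rparr>) H'"
proof -
  obtain n m i where n: "n \<in> nodes H" "m \<in> nodes H" "nmark H n = NGrey" "nmark H m = NGreen"
    "nlab H m = [AInt i]"
    and H': "H' = H\<lparr>nlab := (nlab H)(n := nlab H n @ [AStr ''f''], m := [AInt (i + 1)]),
            nmark := (nmark H)(n := NBlue)\<rparr>"
    using assms(2) by auto
  obtain v where v: "v \<in> V" "n = place A v" using repr_node[OF repr n(1)] n by auto
  have m: "m = c" using repr_green[OF repr n(2,4)] .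
  have i: "i = counter A" using repr n m unfolding repr_def by auto
  have "mark A v = NGrey" using repr v n unfolding repr_def by auto
  moreover have "repr c d (A\<lparr>lab := (lab A)(v := lab A v @ [AStr ''f'']), mark := (mark A)(v := NBlue),
      counter := counter A + 1\<rparr>) H'"
    using repr v repr_place_eq_iff[OF repr] repr_place_ne_counter[OF repr] unfolding repr_def H' m i by auto
  ultimately show ?thesis using v by blast
qed

lemma count_applicable:
  assumes "repr c d A H" and "v \<in> V" "mark A v = NGrey"
  shows "\<exists>H'. apply_rule count H H'"
proof -
  have "place A v \<in> nodes H" "c \<in> nodes H" "place A v \<noteq> c" "nmark H (place A v) = NGrey"
    "nmark H c = NGreen" "nlab H c = [AInt (counter A)]"
    using assms unfolding repr_def by auto
  then show ?thesis by (simp only: apply_rule.simps) blast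
qed

lemma repr_decrement:
  assumes repr: "repr c d A H" and "apply_rule decrement H H'"
  shows "counter A > 0 \<and> repr c d (A\<lparr>counter := counter A - 1\<rparr>) H'"
proof -
  obtain n i where n: "n \<in> nodes H" "nmark H n = NGreen" "nlab H n = [AInt i]" "i > 0"
    and H': "H' = H\<lparr>nlab := (nlab H)(n := [AInt (i - 1)])\<rparr>"
    using assms(2) by auto
  have "n = c" using repr_green[OF repr n(1,2)] .
  moreover from this have "i = counter A" using repr n unfolding repr_def by auto
  ultimately show ?thesis
    using repr repr_place_ne_counter[OF repr] n unfolding repr_def H' by auto
qed

lemma decrement_applicable:
  assumes "repr c d A H" and "counter A > 0"
  shows "\<exists>H'. apply_rule decrement H H'"
proof -
  have "c \<in> nodes H" "nmark H c = NGreen" "nlab H c = [AInt (counter A)]"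
    using assms unfolding repr_def by auto
  then show ?thesis using assms(2) by (simp only: apply_rule.simps) blast
qed

lemma repr_set_flag:
  assumes repr: "repr c d A H" and "apply_rule set_flag H H'"
  shows "repr c d (A\<lparr>counter := -1\<rparr>) H'"
proof -
  obtain n where n: "n \<in> nodes H" "nmark H n = NGreen" and H': "H' = H\<lparr>nlab := (nlab H)(n := [AInt (-1)])\<rparr>"
    using assms(2) by auto
  have "n = c" using repr_green[OF repr n] .
  then show ?thesis
    using repr repr_place_ne_counter[OF repr] n unfolding repr_def H' by auto
qed

lemma set_flag_applicable:
  assumes "repr c d A H"
  shows "\<exists>H'. apply_rule set_flag H H'"
proof -
  have "c \<in> nodes H" "nmark H c = NGreen" using assms unfolding repr_def by auto
  then show ?thesis by (simp only: apply_rule.simps) blast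
qed

lemma repr_flag:
  assumes repr: "repr c d A H" and "apply_rule flag H H'"
  shows "counter A = -1"
proof -
  obtain n where n: "n \<in> nodes H" "nmark H n = NGreen" "nlab H n = [AInt (-1)]"
    using assms(2) by auto
  then have "n = c" using repr_green[OF repr] by blast
  then show ?thesis using repr n unfolding repr_def by auto
qed

lemma flag_applicable:
  assumes "repr c d A H" and "counter A = -1"
  shows "\<exists>H'. apply_rule flag H H'"
proof -
  have "c \<in> nodes H" "nmark H c = NGreen" "nlab H c = [AInt (-1)]"
    using assms unfolding repr_def by auto
  then show ?thesis by (simp only: apply_rule.simps) blast
qed

lemma repr_unmarked_edge:
  assumes repr: "repr c d A H" and "apply_rule unmarked_edge H H'"
  shows "\<exists>e\<in>E. mark A (src G0 e) = NBlue \<and> rooted A (src G0 e) \<and> edge_mark A e = EUnmarked \<and>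
     repr c d (A\<lparr>edge_mark := (edge_mark A)(e := ERed)\<rparr>) H'"
proof -
  obtain e where e: "e \<in> edges H" "nmark H (src H e) = NBlue" "isroot H (src H e)" "emark H e = EUnmarked"
    and H': "H' = H\<lparr>emark := (emark H)(e := ERed)\<rparr>"
    using assms(2) by auto
  have "e \<in> E" using repr_host_edge[OF repr e(1)] e(4) by simp
  then show ?thesis using repr e repr_input_edge[OF repr] unfolding repr_def H' by (intro bexI[of _ e]) auto
qed

lemma unmarked_edge_applicable:
  assumes "repr c d A H" and "e \<in> E" "mark A (src G0 e) = NBlue" "rooted A (src G0 e)"
    "edge_mark A e = EUnmarked"
  shows "\<exists>H'. apply_rule unmarked_edge H H'"
  using assms repr_input_edge[OF assms(1,2)] by (simp only: apply_rule.simps) metis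

lemma repr_finish:
  assumes repr: "repr c d A H" and "apply_rule finish H H'"
  shows "\<exists>e\<in>E. mark A (src G0 e) = NBlue \<and> rooted A (src G0 e) \<and> edge_mark A e = ERed \<and>
     repr c d (A\<lparr>edge_mark := (edge_mark A)(e := EBlue)\<rparr>) H'"
proof -
  obtain e where e: "e \<in> edges H" "nmark H (src H e) = NBlue" "isroot H (src H e)" "emark H e = ERed"
    and H': "H' = H\<lparr>emark := (emark H)(e := EBlue)\<rparr>"
    using assms(2) by auto
  have "e \<in> E" using repr_host_edge[OF repr e(1)] e(4) by simp
  then show ?thesis using repr e repr_input_edge[OF repr] unfolding repr_def H' by (intro bexI[of _ e]) auto
qed

lemma finish_applicable:
  assumes "repr c d A H" and "e \<in> E" "mark A (src G0 e) = NBlue" "rooted A (src G0 e)" "edge_mark A e = ERed"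
  shows "\<exists>H'. apply_rule finish H H'"
  using assms repr_input_edge[OF assms(1,2)] by (simp only: apply_rule.simps) metis

lemma repr_unmark_edge:
  assumes repr: "repr c d A H" and "apply_rule unmark_edge H H'"
  shows "\<exists>e\<in>E. mark A (src G0 e) = NBlue \<and> rooted A (src G0 e) \<and> edge_mark A e = EBlue \<and>
     repr c d (A\<lparr>edge_mark := (edge_mark A)(e := EUnmarked)\<rparr>) H'"
proof -
  obtain e where e: "e \<in> edges H" "nmark H (src H e) = NBlue" "isroot H (src H e)" "emark H e = EBlue"
    and H': "H' = H\<lparr>emark := (emark H)(e := EUnmarked)\<rparr>"
    using assms(2) by auto
  have "e \<in> E" using repr_host_edge[OF repr e(1)] e(4) by simp
  then show ?thesis using repr e repr_input_edge[OF repr] unfolding repr_def H' by (intro bexI[of _ e]) auto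
qed

lemma unmark_edge_applicable:
  assumes "repr c d A H" and "e \<in> E" "mark A (src G0 e) = NBlue" "rooted A (src G0 e)" "edge_mark A e = EBlue"
  shows "\<exists>H'. apply_rule unmark_edge H H'"
  using assms repr_input_edge[OF assms(1,2)] by (simp only: apply_rule.simps) metis

lemma repr_relabel_tgt:
  assumes repr: "repr c d A H" and "e \<in> E"
  shows "repr c d (A\<lparr>lab := (lab A)(tgt G0 e := y @ [AInt i])\<rparr>)
    (H\<lparr>nlab := (nlab H)(tgt G0 e := y @ [AInt i])\<rparr>)"
proof -
  have "place A v = tgt G0 e \<longleftrightarrow> v = tgt G0 e" if "v \<in> V" for v
    using repr_place_eq_iff[OF repr that edge_ends(2)[OF assms(2)]] repr_place_tgt[OF assms] by simp
  moreover have "tgt G0 e \<noteq> c"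
    using repr_place_ne_counter[OF repr edge_ends(2)[OF assms(2)]] repr_place_tgt[OF assms] by simp
  ultimately show ?thesis using repr edge_ends(2)[OF assms(2)] unfolding repr_def by auto
qed

lemma repr_unvisited:
  assumes repr: "repr c d A H" and "apply_rule unvisited H H'"
  shows "\<exists>e\<in>E. mark A (src G0 e) = NBlue \<and> rooted A (src G0 e) \<and> edge_mark A e = ERed \<and>
     (\<exists>x y s. lab A (src G0 e) = x @ [AInt s] \<and> lab A (tgt G0 e) = y @ [AStr ''f''] \<and>
     repr c d (A\<lparr>lab := (lab A)(tgt G0 e := y @ [AInt (s + wt G0 e)])\<rparr>) H')"
proof -
  obtain e x y s w where e: "e \<in> edges H" "nmark H (src H e) = NBlue" "isroot H (src H e)"
    "emark H e = ERed" "nlab H (src H e) = x @ [AInt s]" "nlab H (tgt H e) = y @ [AStr ''f'']"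
    "elab H e = [AInt w]" and H': "H' = H\<lparr>nlab := (nlab H)(tgt H e := y @ [AInt (s + w)])\<rparr>"
    using assms(2) by auto
  have eE: "e \<in> E" using repr_host_edge[OF repr e(1)] e(4) by simp
  note facts = repr_input_edge[OF repr eE]
  have "w = wt G0 e" using facts e by simp
  then show ?thesis
    using e facts repr_relabel_tgt[OF repr eE] unfolding H' by (intro bexI[OF _ eE]) auto
qed

lemma unvisited_applicable:
  assumes "repr c d A H" and "e \<in> E" "mark A (src G0 e) = NBlue" "rooted A (src G0 e)" "edge_mark A e = ERed"
    "lab A (src G0 e) = x @ [AInt s]" "lab A (tgt G0 e) = y @ [AStr ''f'']"
  shows "\<exists>H'. apply_rule unvisited H H'"
  using assms repr_input_edge[OF assms(1,2)] by (simp only: apply_rule.simps) metis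

lemma repr_reduce:
  assumes repr: "repr c d A H" and "apply_rule reduce H H'"
  shows "\<exists>e\<in>E. mark A (src G0 e) = NBlue \<and> rooted A (src G0 e) \<and> edge_mark A e = ERed \<and>
     (\<exists>x y s t. lab A (src G0 e) = x @ [AInt s] \<and> lab A (tgt G0 e) = y @ [AInt t] \<and> s + wt G0 e < t \<and>
     repr c d (A\<lparr>lab := (lab A)(tgt G0 e := y @ [AInt (s + wt G0 e)])\<rparr>) H')"
proof -
  obtain e x y s t w where e: "e \<in> edges H" "nmark H (src H e) = NBlue" "isroot H (src H e)"
    "emark H e = ERed" "nlab H (src H e) = x @ [AInt s]" "nlab H (tgt H e) = y @ [AInt t]"
    "elab H e = [AInt w]" "s + w < t" and H': "H' = H\<lparr>nlab := (nlab H)(tgt H e := y @ [AInt (s + w)])\<rparr>"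
    using assms(2) by auto
  have eE: "e \<in> E" using repr_host_edge[OF repr e(1)] e(4) by simp
  note facts = repr_input_edge[OF repr eE]
  have "w = wt G0 e" using facts e by simp
  then show ?thesis
    using e facts repr_relabel_tgt[OF repr eE] unfolding H' by (intro bexI[OF _ eE]) auto
qed

lemma reduce_applicable:
  assumes "repr c d A H" and "e \<in> E" "mark A (src G0 e) = NBlue" "rooted A (src G0 e)" "edge_mark A e = ERed"
    "lab A (src G0 e) = x @ [AInt s]" "lab A (tgt G0 e) = y @ [AInt t]" "s + wt G0 e < t"
  shows "\<exists>H'. apply_rule reduce H H'"
  using assms repr_input_edge[OF assms(1,2)] by (simp only: apply_rule.simps) metis

lemma repr_no_incident_isolated:
  assumes repr: "repr c d A H" and v: "v \<in> V"
    and no_edges: "\<forall>e\<in>edges H. src H e \<noteq> place A v \<and> tgt H e \<noteq> place A v"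
  shows "v \<in> isolated"
proof (rule ccontr)
  assume "v \<notin> isolated"
  then have "place A v = v" and "v = r \<or> (\<exists>e\<in>E. src G0 e = v \<or> tgt G0 e = v)"
    using repr_place_fixed[OF repr v] v unfolding isolated_def by auto
  then show False using repr no_edges unfolding repr_def by auto
qed

text \<open>\<open>no_deg\<close> may re-create the deleted node under any fresh identifier \<open>m\<close>.\<close>
lemma repr_move_isolated:
  assumes repr: "repr c d A H" and v: "v \<in> V" "v \<in> isolated" and m: "m \<notin> nodes H - {place A v}"
  shows "repr c d (A\<lparr>place := (place A)(v := m), mark := (mark A)(v := NUnmarked),
      rooted := (rooted A)(v := False)\<rparr>)
    (H\<lparr>nodes := insert m (nodes H - {place A v}), nlab := (nlab H)(m := nlab H (place A v)),
      nmark := (nmark H)(m := NUnmarked), isroot := (isroot H)(m := False)\<rparr>)"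
proof -
  let ?f = "(place A)(v := m)"
  have m_ne_c: "m \<noteq> c" using m repr_place_ne_counter[OF repr v(1)] repr unfolding repr_def by auto
  have m_fresh: "place A u \<noteq> m" if "u \<in> V" "u \<noteq> v" for u
    using m repr that v repr_place_eq_iff[OF repr] unfolding repr_def by auto
  have "?f ` V = insert m (place A ` (V - {v}))" using v(1) by auto
  also have "place A ` (V - {v}) = place A ` V - {place A v}" using v repr_place_eq_iff[OF repr] by auto
  finally have image: "?f ` V = insert m (place A ` V - {place A v})" .
  have "inj_on ?f V"
    unfolding inj_on_def using repr_place_eq_iff[OF repr] m_fresh by auto
  moreover have "\<forall>u\<in>V. u \<notin> isolated \<longrightarrow> ?f u = u" using repr v unfolding repr_def by auto
  moreover have "nlab H (place A u) = lab A u \<and> nmark H (place A u) = mark A u \<and>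
      isroot H (place A u) = rooted A u \<and> mark A u \<noteq> NGreen" if "u \<in> V" for u
    using repr that unfolding repr_def by blast
  ultimately show ?thesis
    using image m_ne_c m_fresh repr repr_place_ne_counter[OF repr v(1)] unfolding repr_def by auto
qed

lemma repr_no_deg:
  assumes repr: "repr c d A H" and "apply_rule no_deg H H'"
  shows "\<exists>v\<in>V. mark A v = NBlue \<and> rooted A v \<and> v \<in> isolated \<and> (\<exists>m.
     repr c d (A\<lparr>place := (place A)(v := m), mark := (mark A)(v := NUnmarked), rooted := (rooted A)(v := False)\<rparr>) H')"
proof -
  obtain n m where n: "n \<in> nodes H" "nmark H n = NBlue" "isroot H n"
    "\<forall>e\<in>edges H. src H e \<noteq> n \<and> tgt H e \<noteq> n" "m \<notin> nodes H - {n}"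
    and H': "H' = H\<lparr>nodes := insert m (nodes H - {n}), nlab := (nlab H)(m := nlab H n),
            nmark := (nmark H)(m := NUnmarked), isroot := (isroot H)(m := False)\<rparr>"
    using assms(2) by auto
  obtain v where v: "v \<in> V" "n = place A v" using repr_node[OF repr n(1)] n by auto
  have "mark A v = NBlue" "rooted A v" using repr v n unfolding repr_def by auto
  moreover have "v \<in> isolated" using repr_no_incident_isolated[OF repr v(1)] n(4) v(2) by blast
  ultimately show ?thesis
    using repr_move_isolated[OF repr v(1) _ n(5)[unfolded v(2)]] v unfolding H' by blast
qed

lemma no_deg_applicable:
  assumes repr: "repr c d A H" and v: "v \<in> V" "mark A v = NBlue" "rooted A v" "v \<in> isolated"
  shows "\<exists>H'. apply_rule no_deg H H'"
proof -
  have "place A v \<noteq> r"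
    using repr_place_eq_iff[OF repr v(1) root_node] repr_place_root[OF repr] v(4) root_not_isolated by auto
  moreover have "src G0 e \<noteq> place A v \<and> tgt G0 e \<noteq> place A v" if "e \<in> E" for e
    using repr_place_eq_iff[OF repr v(1)] repr_place_src[OF repr that] repr_place_tgt[OF repr that]
      edge_ends[OF that] edge_ends_not_isolated[OF that] v(4) by metis
  ultimately have "src H e \<noteq> place A v \<and> tgt H e \<noteq> place A v" if "e \<in> edges H" for e
    using that repr repr_input_edge(2,3)[OF repr] repr_place_ne_counter[OF repr v(1)]
    unfolding repr_def by (cases "e = d") auto
  moreover have "place A v \<in> nodes H" "nmark H (place A v) = NBlue" "isroot H (place A v)"
    using repr v unfolding repr_def by auto
  ultimately show ?thesis by (simp only: apply_rule.simps) blast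
qed

lemma repr_delete_counter:
  assumes repr: "repr c d A H" and "apply_rule delete_counter H H'"
  shows "mark A r = NGrey \<and> repr_final (A\<lparr>rooted := (rooted A)(r := True)\<rparr>) H'"
proof -
  obtain n m d' where n: "n \<in> nodes H" "m \<in> nodes H" "d' \<in> edges H" "src H d' = m" "tgt H d' = n"
    "nmark H n = NGrey" "nmark H m = NGreen" "emark H d' = EDashed"
    and H': "H' = H\<lparr>nodes := nodes H - {m}, edges := edges H - {d'}, isroot := (isroot H)(n := True)\<rparr>"
    using assms(2) by auto
  have m: "m = c" using repr_green[OF repr n(2,7)] .
  have d': "d' = d"
  proof (rule ccontr)
    assume "d' \<noteq> d"
    then have "d' \<in> E" using repr n(3) unfolding repr_def by auto
    then have "src H d' = src G0 d'" "place A (src G0 d') = src G0 d'" "place A (src G0 d') \<noteq> c"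
      using repr_input_edge(2)[OF repr] repr_place_src[OF repr] repr_place_ne_counter[OF repr]
        edge_ends(1) by blast+
    then show False using n(4) m by simp
  qed
  have n_r: "n = r" using repr n(5) d' unfolding repr_def by simp
  have place_r: "place A r = r" using repr_place_root[OF repr] .
  have "mark A r = NGrey" using repr n(6) n_r place_r root_node unfolding repr_def by metis
  moreover have "place A v = r \<longleftrightarrow> v = r" if "v \<in> V" for v
    using repr_place_eq_iff[OF repr that root_node] place_r by simp
  then have "repr_final (A\<lparr>rooted := (rooted A)(r := True)\<rparr>) H'"
    using repr unfolding repr_def repr_final_def H' m d' n_r by auto
  ultimately show ?thesis ..
qed

lemma delete_counter_applicable:
  assumes repr: "repr c d A H" and grey: "mark A r = NGrey"
  shows "\<exists>H'. apply_rule delete_counter H H'"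
proof -
  have place_r: "place A r = r" using repr_place_root[OF repr] .
  then have "r \<in> place A ` V" using root_node by (metis image_eqI)
  moreover have "r \<noteq> c" using repr_place_ne_counter[OF repr root_node] place_r by simp
  moreover have "nmark H r = NGrey" using repr grey place_r root_node unfolding repr_def by metis
  ultimately have match: "r \<in> nodes H" "c \<in> nodes H" "r \<noteq> c" "d \<in> edges H" "src H d = c" "tgt H d = r"
    "nmark H r = NGrey" "nmark H c = NGreen" "emark H d = EDashed"
    using repr unfolding repr_def by auto
  moreover have dangling: "e = d" if "e \<in> edges H" "src H e = c \<or> tgt H e = c" for e
  proof (rule ccontr)
    assume "e \<noteq> d"
    then have e: "e \<in> E" using that repr unfolding repr_def by auto
    have "src H e = place A (src G0 e)" "tgt H e = place A (tgt G0 e)"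
      using repr_input_edge(2,3)[OF repr e] repr_place_src[OF repr e] repr_place_tgt[OF repr e] by simp_all
    then show False
      using that(2) repr_place_ne_counter[OF repr edge_ends(1)[OF e]]
        repr_place_ne_counter[OF repr edge_ends(2)[OF e]] by auto
  qed
  have "apply_rule delete_counter H
      (H\<lparr>nodes := nodes H - {c}, edges := edges H - {d}, isroot := (isroot H)(r := True)\<rparr>)"
    unfolding apply_rule.simps
    by (intro exI[of _ r] exI[of _ c] exI[of _ d] conjI ballI impI) (simp_all add: match dangling)
  then show ?thesis ..
qed

lemma repr_no_deg_inv:
  assumes repr: "repr_final A H" and "apply_rule no_deg_inv H H'"
  shows "\<exists>v\<in>V. mark A v = NUnmarked \<and> repr_final (A\<lparr>mark := (mark A)(v := NGrey)\<rparr>) H'"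
proof -
  obtain n where n: "n \<in> nodes H" "nmark H n = NUnmarked" and H': "H' = H\<lparr>nmark := (nmark H)(n := NGrey)\<rparr>"
    using assms(2) by auto
  obtain v where v: "v \<in> V" "n = place A v" using repr n unfolding repr_final_def by auto
  have "mark A v = NUnmarked" using repr v n unfolding repr_final_def by auto
  moreover have "repr_final (A\<lparr>mark := (mark A)(v := NGrey)\<rparr>) H'"
    using repr v unfolding repr_final_def H' by (auto simp: inj_on_eq_iff)
  ultimately show ?thesis using v by blast
qed

lemma no_deg_inv_applicable:
  "repr_final A H \<Longrightarrow> v \<in> V \<Longrightarrow> mark A v = NUnmarked \<Longrightarrow> \<exists>H'. apply_rule no_deg_inv H H'"
  unfolding repr_final_def by auto

definition init_state :: astate where
  "init_state = \<lparr>place = id, lab = (\<lambda>v. if v = r then nlab G0 r @ [AInt 0] else nlab G0 v),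
     mark = (\<lambda>v. if v = r then NBlue else NGrey), rooted = (\<lambda>v. False), edge_mark = (\<lambda>e. EUnmarked),
     counter = 0\<rparr>"

lemma repr_set_counter:
  assumes "apply_rule set_counter G0 H"
  shows "\<exists>c d. repr c d init_state H"
proof -
  obtain n m d where n: "n \<in> V" "isroot G0 n" "m \<notin> V" "d \<notin> E"
    and H: "H = G0\<lparr>nodes := insert m (nodes G0), edges := insert d (edges G0),
            src := (src G0)(d := m), tgt := (tgt G0)(d := n),
            nlab := (nlab G0)(n := nlab G0 n @ [AInt 0], m := [AInt 0]),
            nmark := (nmark G0)(n := NBlue, m := NGreen),
            isroot := (isroot G0)(n := False, m := False),
            elab := (elab G0)(d := []), emark := (emark G0)(d := EDashed)\<rparr>"
    using assms by auto
  have n_r: "n = r" using input_sole_root n by auto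
  have "m \<noteq> r" using n root_node by auto
  have "repr m d init_state H"
    unfolding repr_def
  proof (intro conjI)
    show "\<forall>e\<in>E. src H e = src G0 e \<and> tgt H e = tgt G0 e \<and> elab H e = elab G0 e \<and>
        emark H e = edge_mark init_state e"
      using n(4) input_unmarked unfolding H init_state_def by auto
    have "v \<noteq> m" if "v \<in> V" for v using that n by auto
    then show "\<forall>v\<in>V. nlab H (place init_state v) = lab init_state v \<and>
        nmark H (place init_state v) = mark init_state v \<and>
        isroot H (place init_state v) = rooted init_state v \<and> mark init_state v \<noteq> NGreen"
      using all_grey input_sole_root unfolding H init_state_def n_r by auto
  qed (use n \<open>m \<noteq> r\<close> in \<open>simp_all add: H init_state_def n_r\<close>)
  then show ?thesis by blast
qed

lemma set_counter_applicable: "\<exists>H. apply_rule set_counter G0 H"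
proof -
  obtain m where "m \<notin> V" using ex_new_if_finite[OF infinite_UNIV_nat finite_V] by blast
  moreover obtain d where "d \<notin> E" using ex_new_if_finite[OF infinite_UNIV_nat finite_E] by blast
  ultimately show ?thesis using root_node root_flag all_grey by (simp only: apply_rule.simps) blast
qed

section \<open>Verification of the program\<close>

definition est_lab :: "estimate \<Rightarrow> nat \<Rightarrow> label" where
  "est_lab D v = nlab G0 v @ [est_atom (D v)]"

lemma est_lab_Int: "est_lab D v = x @ [AInt s] \<longleftrightarrow> x = nlab G0 v \<and> D v = Some s"
  unfolding est_lab_def by (cases "D v") auto

lemma est_lab_Str: "est_lab D v = x @ [AStr ''f''] \<longleftrightarrow> x = nlab G0 v \<and> D v = None"
  unfolding est_lab_def by (cases "D v") auto

definition relax_marks :: "astate \<Rightarrow> bool" where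
  "relax_marks A \<longleftrightarrow> (\<forall>u\<in>V. u \<notin> isolated \<longrightarrow> mark A u \<in> {NBlue, NGrey}) \<and>
     (\<forall>u\<in>V. u \<in> isolated \<longrightarrow> mark A u \<in> {NBlue, NUnmarked})"

definition sole_root :: "astate \<Rightarrow> nat \<Rightarrow> bool" where
  "sole_root A v \<longleftrightarrow> (\<forall>u\<in>V. rooted A u = (u = v))"

definition no_root :: "astate \<Rightarrow> bool" where
  "no_root A \<longleftrightarrow> (\<forall>u\<in>V. \<not> rooted A u)"

definition edge_mark_ok :: "astate \<Rightarrow> nat \<Rightarrow> bool" where
  "edge_mark_ok A e \<longleftrightarrow> edge_mark A e = (if mark A (src G0 e) = NGrey then EBlue else EUnmarked)"

definition blue_count :: "astate \<Rightarrow> nat" where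
  "blue_count A = card {u\<in>V. mark A u = NBlue}"

definition out_edges :: "nat \<Rightarrow> nat set" where
  "out_edges v = {e\<in>E. src G0 e = v}"

lemma finite_out_edges: "finite (out_edges v)"
  unfolding out_edges_def using finite_E by simp

definition unmarked_out :: "astate \<Rightarrow> nat \<Rightarrow> nat" where
  "unmarked_out A v = card {e\<in>out_edges v. edge_mark A e = EUnmarked}"

lemma sole_root_eq: "sole_root A v \<Longrightarrow> u \<in> V \<Longrightarrow> rooted A u \<Longrightarrow> u = v"
  unfolding sole_root_def by auto

lemma blue_count_less:
  "v \<in> V \<Longrightarrow> mark A v = NBlue \<Longrightarrow> m \<noteq> NBlue \<Longrightarrow>
    blue_count (A\<lparr>mark := (mark A)(v := m), rooted := rt\<rparr>) < blue_count A"
  using card_update_less[OF finite_V, of v "mark A" NBlue m] by (simp add: blue_count_def del: fun_upd_apply)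

lemma unmarked_out_less:
  "e \<in> E \<Longrightarrow> src G0 e = v \<Longrightarrow> edge_mark A e = EUnmarked \<Longrightarrow> m \<noteq> EUnmarked \<Longrightarrow>
    unmarked_out (A\<lparr>edge_mark := (edge_mark A)(e := m)\<rparr>) v < unmarked_out A v"
  using card_update_less[OF finite_out_edges[of v], of e "edge_mark A" EUnmarked m]
  by (simp add: unmarked_out_def out_edges_def del: fun_upd_apply)

text \<open>Round \<open>k\<close> (counting from 0) of the main loop; the counter node holds the number of
  rounds still to come.\<close>
definition relax_core :: "nat \<Rightarrow> nat \<Rightarrow> nat \<Rightarrow> astate \<Rightarrow> estimate \<Rightarrow> hgraph \<Rightarrow> bool" where
  "relax_core c d k A D H \<longleftrightarrow> repr c d A H \<and> (\<forall>u\<in>V. lab A u = est_lab D u) \<and>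
     walk_bound k D \<and> walk_realised D \<and> counter A = int (rounds - Suc k) \<and> Suc k \<le> rounds \<and>
     relax_marks A"

definition relax_inv :: "nat \<Rightarrow> nat \<Rightarrow> nat \<Rightarrow> astate \<Rightarrow> estimate \<Rightarrow> hgraph \<Rightarrow> bool" where
  "relax_inv c d k A D H \<longleftrightarrow> relax_core c d k A D H \<and> no_root A \<and> (\<forall>e\<in>E. edge_mark_ok A e) \<and>
     (\<forall>e\<in>E. edge_mark A e = EBlue \<longrightarrow> edge_bound k D e)"

definition relax_node_inv :: "nat \<Rightarrow> nat \<Rightarrow> nat \<Rightarrow> nat \<Rightarrow> nat \<Rightarrow> astate \<Rightarrow> estimate \<Rightarrow> hgraph \<Rightarrow> bool" where
  "relax_node_inv c d k v N A D H \<longleftrightarrow> relax_core c d k A D H \<and> v \<in> V \<and> mark A v = NBlue \<and>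
     sole_root A v \<and> blue_count A = N \<and> (\<forall>e\<in>E. edge_mark_ok A e) \<and>
     (\<forall>e\<in>E. edge_mark A e = EBlue \<longrightarrow> edge_bound k D e)"

definition relax_edges_inv :: "nat \<Rightarrow> nat \<Rightarrow> nat \<Rightarrow> nat \<Rightarrow> nat \<Rightarrow> astate \<Rightarrow> estimate \<Rightarrow> hgraph \<Rightarrow> bool" where
  "relax_edges_inv c d k v N A D H \<longleftrightarrow> relax_core c d k A D H \<and> v \<in> V \<and> v \<notin> isolated \<and>
     mark A v = NBlue \<and> sole_root A v \<and> blue_count A = N \<and>
     (\<forall>e\<in>E. src G0 e \<noteq> v \<longrightarrow> edge_mark_ok A e) \<and>
     (\<forall>e\<in>E. src G0 e = v \<longrightarrow> edge_mark A e \<in> {EUnmarked, EBlue}) \<and>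
     (\<forall>e\<in>E. edge_mark A e = EBlue \<longrightarrow> edge_bound k D e)"

definition relax_red_inv ::
    "nat \<Rightarrow> nat \<Rightarrow> nat \<Rightarrow> nat \<Rightarrow> nat \<Rightarrow> nat \<Rightarrow> nat \<Rightarrow> astate \<Rightarrow> estimate \<Rightarrow> hgraph \<Rightarrow> bool" where
  "relax_red_inv c d k v N M e0 A D H \<longleftrightarrow> relax_core c d k A D H \<and> v \<in> V \<and> v \<notin> isolated \<and>
     mark A v = NBlue \<and> sole_root A v \<and> blue_count A = N \<and>
     e0 \<in> E \<and> src G0 e0 = v \<and> edge_mark A e0 = ERed \<and>
     (\<forall>e\<in>E. src G0 e \<noteq> v \<longrightarrow> edge_mark_ok A e) \<and>
     (\<forall>e\<in>E. src G0 e = v \<and> e \<noteq> e0 \<longrightarrow> edge_mark A e \<in> {EUnmarked, EBlue}) \<and>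
     (\<forall>e\<in>E. edge_mark A e = EBlue \<longrightarrow> edge_bound k D e) \<and> unmarked_out A v < M"

lemma relax_red_inv_red:
  "relax_red_inv c d k v N M e0 A D H \<Longrightarrow> e \<in> E \<Longrightarrow> edge_mark A e = ERed \<Longrightarrow> e = e0"
  unfolding relax_red_inv_def edge_mark_ok_def by (metis emark.distinct insertE empty_iff)

lemma relax_red_invD:
  assumes "relax_red_inv c d k v N M e0 A D G"
  shows "repr c d A G" "e0 \<in> E" "src G0 e0 = v" "v \<in> V" "mark A v = NBlue" "rooted A v"
    "edge_mark A e0 = ERed" "\<forall>u\<in>V. lab A u = est_lab D u" "walk_bound k D" "walk_realised D"
    "tgt G0 e0 \<in> V"
  using assms edge_ends unfolding relax_red_inv_def relax_core_def sole_root_def by auto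

lemma relax_red_inv_relabel:
  assumes I: "relax_red_inv c d k v N M e0 A D G" and repr': "repr c d (A\<lparr>lab := L\<rparr>) H"
    and lab: "\<forall>u\<in>V. L u = est_lab D' u" and le: "est_le D' D" and real: "walk_realised D'"
  shows "relax_red_inv c d k v N M e0 (A\<lparr>lab := L\<rparr>) D' H"
  using I repr' lab real walk_bound_mono[OF _ le] edge_bound_mono[OF _ le]
  unfolding relax_red_inv_def relax_core_def relax_marks_def sole_root_def blue_count_def
    edge_mark_ok_def unmarked_out_def
  by simp

lemma wp_relax_unmarked_edge:
  assumes I: "relax_edges_inv c d k v N A D G"
  shows "wp (R unmarked_edge)
    (case_result (\<lambda>H. \<exists>e0 A'. relax_red_inv c d k v N (unmarked_out A v) e0 A' D H)
      (\<forall>e\<in>E. src G0 e = v \<longrightarrow> edge_mark A e \<noteq> EUnmarked)) G"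
proof (rule wp_rule)
  have repr: "repr c d A G" using I unfolding relax_edges_inv_def relax_core_def by blast
  fix H assume "apply_rule unmarked_edge G H"
  then obtain e where e: "e \<in> E" "mark A (src G0 e) = NBlue" "rooted A (src G0 e)" "edge_mark A e = EUnmarked"
    and repr': "repr c d (A\<lparr>edge_mark := (edge_mark A)(e := ERed)\<rparr>) H"
    using repr_unmarked_edge[OF repr] by blast
  have "src G0 e = v" using sole_root_eq[of A v "src G0 e"] I e edge_ends unfolding relax_edges_inv_def by blast
  then have "relax_red_inv c d k v N (unmarked_out A v) e (A\<lparr>edge_mark := (edge_mark A)(e := ERed)\<rparr>) D H"
    using I repr' e unmarked_out_less[OF e(1) _ e(4)]
    unfolding relax_edges_inv_def relax_red_inv_def relax_core_def relax_marks_def sole_root_def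
      blue_count_def edge_mark_ok_def
    by auto
  then show "\<exists>e0 A'. relax_red_inv c d k v N (unmarked_out A v) e0 A' D H" by blast
next
  have repr: "repr c d A G" using I unfolding relax_edges_inv_def relax_core_def by blast
  assume none: "\<nexists>H. apply_rule unmarked_edge G H"
  have "mark A v = NBlue" "rooted A v" using I unfolding relax_edges_inv_def sole_root_def by auto
  then show "\<forall>e\<in>E. src G0 e = v \<longrightarrow> edge_mark A e \<noteq> EUnmarked"
    using unmarked_edge_applicable[OF repr] none by blast
qed

lemma relax_red_inv_update:
  assumes I: "relax_red_inv c d k v N M e0 A D G" and s: "D v = Some s"
    and le: "est_le (D(tgt G0 e0 := Some (s + wt G0 e0))) D"
    and repr': "repr c d (A\<lparr>lab := (lab A)(tgt G0 e0 := nlab G0 (tgt G0 e0) @ [AInt (s + wt G0 e0)])\<rparr>) H"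
  shows "\<exists>A' D'. relax_red_inv c d k v N M e0 A' D' H \<and> edge_bound k D' e0"
proof -
  note F = relax_red_invD[OF I]
  let ?t = "tgt G0 e0" and ?w = "wt G0 e0"
  let ?D = "D(?t := Some (s + ?w))"
  have "\<forall>u\<in>V. ((lab A)(?t := nlab G0 ?t @ [AInt (s + ?w)])) u = est_lab ?D u"
    using F(8) unfolding est_lab_def by auto
  moreover have "walk_realised ?D" using walk_realised_update[OF F(10,2)] s F(3) by simp
  moreover have "edge_bound k ?D e0"
    by (rule edge_boundI[OF walk_bound_mono[OF F(9) le]]) (use s F(3) no_loops F(2) in auto)
  ultimately show ?thesis using relax_red_inv_relabel[OF I repr' _ le] by blast
qed

lemma relax_red_inv_edge_bound:
  assumes I: "relax_red_inv c d k v N M e0 A D G"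
    and none: "\<nexists>H. apply_rule unvisited G H" "\<nexists>H. apply_rule reduce G H"
  shows "edge_bound k D e0"
proof (rule edge_boundI)
  note F = relax_red_invD[OF I]
  let ?t = "tgt G0 e0"
  show "walk_bound k D" by (rule F(9))
  fix s assume s: "D (src G0 e0) = Some s"
  have src_lab: "lab A (src G0 e0) = nlab G0 (src G0 e0) @ [AInt s]"
    using s F(3,4,8) by (simp add: est_lab_def)
  show "\<exists>t. D ?t = Some t \<and> t \<le> s + wt G0 e0"
  proof (cases "D ?t")
    case None
    then have "lab A ?t = nlab G0 ?t @ [AStr ''f'']" using F(8,11) by (simp add: est_lab_def)
    then show ?thesis using unvisited_applicable[OF F(1,2)] F src_lab none(1) by auto
  next
    case (Some t)
    then have "lab A ?t = nlab G0 ?t @ [AInt t]" using F(8,11) by (simp add: est_lab_def)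
    then show ?thesis using reduce_applicable[OF F(1,2)] F src_lab none(2) Some by fastforce
  qed
qed

lemma wp_relax_update:
  assumes I: "relax_red_inv c d k v N M e0 A D G"
  shows "wp (Call [unvisited, reduce])
    (case_result (\<lambda>H. \<exists>A' D'. relax_red_inv c d k v N M e0 A' D' H \<and> edge_bound k D' e0)
      (edge_bound k D e0)) G"
proof (rule wp_call)
  note F = relax_red_invD[OF I]
  let ?t = "tgt G0 e0"
  fix rl H assume "rl \<in> set [unvisited, reduce]" and "apply_rule rl G H"
  then consider "apply_rule unvisited G H" | "apply_rule reduce G H" by auto
  then show "\<exists>A' D'. relax_red_inv c d k v N M e0 A' D' H \<and> edge_bound k D' e0"
  proof cases
    case 1
    then obtain e x y s where e: "e \<in> E" "edge_mark A e = ERed" "lab A (src G0 e) = x @ [AInt s]"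
      "lab A (tgt G0 e) = y @ [AStr ''f'']"
      and repr': "repr c d (A\<lparr>lab := (lab A)(tgt G0 e := y @ [AInt (s + wt G0 e)])\<rparr>) H"
      using repr_unvisited[OF F(1)] by blast
    have e0: "e = e0" using relax_red_inv_red[OF I e(1,2)] .
    have "D v = Some s" "D ?t = None" "y = nlab G0 ?t"
      using e(3,4) e0 F(3,4,8,11) by (auto simp: est_lab_Int est_lab_Str)
    then show ?thesis using relax_red_inv_update[OF I] repr' e0 est_le_update by simp
  next
    case 2
    then obtain e x y s t where e: "e \<in> E" "edge_mark A e = ERed" "lab A (src G0 e) = x @ [AInt s]"
      "lab A (tgt G0 e) = y @ [AInt t]" "s + wt G0 e < t"
      and repr': "repr c d (A\<lparr>lab := (lab A)(tgt G0 e := y @ [AInt (s + wt G0 e)])\<rparr>) H"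
      using repr_reduce[OF F(1)] by blast
    have e0: "e = e0" using relax_red_inv_red[OF I e(1,2)] .
    have "D v = Some s" "D ?t = Some t" "y = nlab G0 ?t"
      using e(3,4) e0 F(3,4,8,11) by (auto simp: est_lab_Int)
    then show ?thesis using relax_red_inv_update[OF I] repr' e0 e(5) est_le_update by simp
  qed
qed (use relax_red_inv_edge_bound[OF I] in auto)

lemma wp_relax_finish:
  assumes I: "relax_red_inv c d k v N M e0 A D G" and relaxed: "edge_bound k D e0"
  shows "wp (R finish) (case_result (\<lambda>H. \<exists>A'. relax_edges_inv c d k v N A' D H \<and> unmarked_out A' v < M) False) G"
proof (rule wp_rule)
  note F = relax_red_invD[OF I]
  fix H assume "apply_rule finish G H"
  then obtain e where e: "e \<in> E" "edge_mark A e = ERed"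
    and repr': "repr c d (A\<lparr>edge_mark := (edge_mark A)(e := EBlue)\<rparr>) H"
    using repr_finish[OF F(1)] by blast
  have e0: "e = e0" using relax_red_inv_red[OF I e(1,2)] .
  let ?A = "A\<lparr>edge_mark := (edge_mark A)(e0 := EBlue)\<rparr>"
  have "unmarked_out ?A v = unmarked_out A v"
    unfolding unmarked_out_def using F(7) by (intro arg_cong[where f = card]) auto
  moreover have "relax_edges_inv c d k v N ?A D H"
    using I repr' e0 relaxed
    unfolding relax_red_inv_def relax_edges_inv_def relax_core_def relax_marks_def sole_root_def
      blue_count_def edge_mark_ok_def
    by auto
  ultimately show "\<exists>A'. relax_edges_inv c d k v N A' D H \<and> unmarked_out A' v < M"
    using I unfolding relax_red_inv_def by auto
next
  note F = relax_red_invD[OF I]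
  assume "\<nexists>H. apply_rule finish G H"
  then show False using finish_applicable[OF F(1,2)] F by auto
qed

definition relax_edge_cmd :: cmd where
  "relax_edge_cmd = Seq (R unmarked_edge) (Seq (Try (Call [unvisited, reduce]) Skip Skip) (R finish))"

lemma Relax_unfold: "Relax = Seq (R root1) (Try (R no_deg) Skip (Seq (Loop relax_edge_cmd) (R unroot1)))"
  unfolding Relax_def relax_edge_cmd_def ..

lemma wp_relax_edge:
  assumes I: "relax_edges_inv c d k v N A D G"
  shows "wp relax_edge_cmd
    (case_result (\<lambda>H. \<exists>A' D'. relax_edges_inv c d k v N A' D' H \<and> unmarked_out A' v < unmarked_out A v)
      (\<forall>e\<in>E. src G0 e = v \<longrightarrow> edge_mark A e \<noteq> EUnmarked)) G"
  unfolding relax_edge_cmd_def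
proof (rule wp_seq[OF wp_relax_unmarked_edge[OF I]])
  fix H1 assume "\<exists>e0 A'. relax_red_inv c d k v N (unmarked_out A v) e0 A' D H1"
  then obtain e0 A1 where I1: "relax_red_inv c d k v N (unmarked_out A v) e0 A1 D H1" by blast
  let ?M = "\<lambda>H. \<exists>A' D'. relax_red_inv c d k v N (unmarked_out A v) e0 A' D' H \<and> edge_bound k D' e0"
  have "wp (Try (Call [unvisited, reduce]) Skip Skip) (case_result ?M False) H1"
  proof (rule wp_try[OF wp_relax_update[OF I1]])
    show "wp Skip (case_result ?M False) H" if "?M H" for H using that by (intro wp_skip) simp
    show "wp Skip (case_result ?M False) H1" if "edge_bound k D e0" using I1 that by (intro wp_skip) auto
  qed
  then show "wp (Seq (Try (Call [unvisited, reduce]) Skip Skip) (R finish))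
    (case_result (\<lambda>H. \<exists>A' D'. relax_edges_inv c d k v N A' D' H \<and> unmarked_out A' v < unmarked_out A v)
      (\<forall>e\<in>E. src G0 e = v \<longrightarrow> edge_mark A e \<noteq> EUnmarked)) H1"
    by (rule wp_seq) (fastforce elim!: wp_mono[OF wp_relax_finish] split: result.splits)+
qed simp

lemma wp_relax_edges:
  assumes "relax_edges_inv c d k v N A D G"
  shows "wp (Loop relax_edge_cmd) (case_result (\<lambda>H. \<exists>A' D'. relax_edges_inv c d k v N A' D' H \<and>
    (\<forall>e\<in>E. src G0 e = v \<longrightarrow> edge_mark A' e \<noteq> EUnmarked)) False) G"
proof -
  have "wp (Loop relax_edge_cmd) (case_result (\<lambda>H. \<exists>A'. (\<exists>D'. relax_edges_inv c d k v N A' D' H) \<and>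
      (\<forall>e\<in>E. src G0 e = v \<longrightarrow> edge_mark A' e \<noteq> EUnmarked)) False) G"
    using assms
    by (intro wp_loop[where I = "\<lambda>A H. \<exists>D. relax_edges_inv c d k v N A D H" and \<mu> = "\<lambda>A. unmarked_out A v"])
      (blast, fastforce elim!: wp_mono[OF wp_relax_edge] split: result.splits)
  then show ?thesis by (rule wp_mono) (auto split: result.splits)
qed

lemma wp_relax_root1:
  assumes I: "relax_inv c d k A D G"
  shows "wp (R root1) (case_result (\<lambda>H. \<exists>v A'. relax_node_inv c d k v (blue_count A) A' D H)
    (\<forall>u\<in>V. mark A u \<noteq> NBlue)) G"
proof (rule wp_rule)
  have repr: "repr c d A G" using I unfolding relax_inv_def relax_core_def by blast
  fix H assume "apply_rule root1 G H"
  then obtain v where v: "v \<in> V" "mark A v = NBlue"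
    and repr': "repr c d (A\<lparr>rooted := (rooted A)(v := True)\<rparr>) H"
    using repr_root1[OF repr] by blast
  have "relax_node_inv c d k v (blue_count A) (A\<lparr>rooted := (rooted A)(v := True)\<rparr>) D H"
    using I repr' v
    unfolding relax_inv_def relax_node_inv_def relax_core_def relax_marks_def sole_root_def no_root_def
      blue_count_def edge_mark_ok_def
    by auto
  then show "\<exists>v A'. relax_node_inv c d k v (blue_count A) A' D H" by blast
next
  have repr: "repr c d A G" using I unfolding relax_inv_def relax_core_def by blast
  assume "\<nexists>H. apply_rule root1 G H"
  then show "\<forall>u\<in>V. mark A u \<noteq> NBlue" using root1_applicable[OF repr] by blast
qed

lemma wp_relax_no_deg:
  assumes I: "relax_node_inv c d k v N A D G"
  shows "wp (R no_deg) (case_result (\<lambda>H. \<exists>A' D'. relax_inv c d k A' D' H \<and> blue_count A' < N)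
    (v \<notin> isolated)) G"
proof (rule wp_rule)
  have repr: "repr c d A G" using I unfolding relax_node_inv_def relax_core_def by blast
  fix H assume "apply_rule no_deg G H"
  then obtain v' m where v': "v' \<in> V" "mark A v' = NBlue" "rooted A v'" "v' \<in> isolated"
    and repr': "repr c d (A\<lparr>place := (place A)(v' := m), mark := (mark A)(v' := NUnmarked),
      rooted := (rooted A)(v' := False)\<rparr>) H"
    using repr_no_deg[OF repr] by blast
  have "v' = v" using v' I unfolding relax_node_inv_def sole_root_def by auto
  let ?A = "A\<lparr>place := (place A)(v := m), mark := (mark A)(v := NUnmarked), rooted := (rooted A)(v := False)\<rparr>"
  have "edge_mark_ok ?A e" if "e \<in> E" for e
    using I that edge_ends_not_isolated(1)[OF that] v' \<open>v' = v\<close>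
    unfolding relax_node_inv_def edge_mark_ok_def by auto
  then have "relax_inv c d k ?A D H"
    using I repr' v' \<open>v' = v\<close>
    unfolding relax_inv_def relax_node_inv_def relax_core_def relax_marks_def sole_root_def no_root_def
    by auto
  moreover have "blue_count ?A < N"
    using blue_count_less[of v A NUnmarked] v' \<open>v' = v\<close> I unfolding relax_node_inv_def blue_count_def
    by auto
  ultimately show "\<exists>A' D'. relax_inv c d k A' D' H \<and> blue_count A' < N" by blast
next
  have repr: "repr c d A G" using I unfolding relax_node_inv_def relax_core_def by blast
  assume "\<nexists>H. apply_rule no_deg G H"
  then show "v \<notin> isolated"
    using no_deg_applicable[OF repr] I unfolding relax_node_inv_def sole_root_def by auto
qed

lemma relax_edges_start:
  "relax_node_inv c d k v N A D G \<Longrightarrow> v \<notin> isolated \<Longrightarrow> relax_edges_inv c d k v N A D G"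
  unfolding relax_node_inv_def relax_edges_inv_def edge_mark_ok_def by auto

lemma wp_relax_unroot1:
  assumes I: "relax_edges_inv c d k v N A D G"
    and finished: "\<forall>e\<in>E. src G0 e = v \<longrightarrow> edge_mark A e \<noteq> EUnmarked"
  shows "wp (R unroot1) (case_result (\<lambda>H. \<exists>A' D'. relax_inv c d k A' D' H \<and> blue_count A' < N) False) G"
proof (rule wp_rule)
  have repr: "repr c d A G" using I unfolding relax_edges_inv_def relax_core_def by blast
  fix H assume "apply_rule unroot1 G H"
  then obtain v' where v': "v' \<in> V" "mark A v' = NBlue" "rooted A v'"
    and repr': "repr c d (A\<lparr>mark := (mark A)(v' := NGrey), rooted := (rooted A)(v' := False)\<rparr>) H"
    using repr_unroot1[OF repr] by blast
  have "v' = v" using v' I unfolding relax_edges_inv_def sole_root_def by auto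
  let ?A = "A\<lparr>mark := (mark A)(v := NGrey), rooted := (rooted A)(v := False)\<rparr>"
  have "edge_mark_ok ?A e" if "e \<in> E" for e
    using I finished that unfolding relax_edges_inv_def edge_mark_ok_def by (cases "src G0 e = v") auto
  then have "relax_inv c d k ?A D H"
    using I repr' v' \<open>v' = v\<close>
    unfolding relax_inv_def relax_edges_inv_def relax_core_def relax_marks_def sole_root_def no_root_def
    by auto
  moreover have "blue_count ?A < N"
    using blue_count_less[of v A NGrey] v' \<open>v' = v\<close> I unfolding relax_edges_inv_def blue_count_def by auto
  ultimately show "\<exists>A' D'. relax_inv c d k A' D' H \<and> blue_count A' < N" by blast
next
  have repr: "repr c d A G" using I unfolding relax_edges_inv_def relax_core_def by blast
  assume "\<nexists>H. apply_rule unroot1 G H"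
  then show False using unroot1_applicable[OF repr] I unfolding relax_edges_inv_def sole_root_def by auto
qed

lemma wp_Relax:
  assumes I: "relax_inv c d k A D G"
  shows "wp Relax (case_result (\<lambda>H. \<exists>A' D'. relax_inv c d k A' D' H \<and> blue_count A' < blue_count A)
    (\<forall>u\<in>V. mark A u \<noteq> NBlue)) G"
  unfolding Relax_unfold
proof (rule wp_seq[OF wp_relax_root1[OF I]])
  fix H1 assume "\<exists>v A'. relax_node_inv c d k v (blue_count A) A' D H1"
  then obtain v A1 where I1: "relax_node_inv c d k v (blue_count A) A1 D H1" by blast
  show "wp (Try (R no_deg) Skip (Seq (Loop relax_edge_cmd) (R unroot1)))
    (case_result (\<lambda>H. \<exists>A' D'. relax_inv c d k A' D' H \<and> blue_count A' < blue_count A)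
      (\<forall>u\<in>V. mark A u \<noteq> NBlue)) H1"
  proof (rule wp_try[OF wp_relax_no_deg[OF I1]])
    assume "v \<notin> isolated"
    show "wp (Seq (Loop relax_edge_cmd) (R unroot1))
      (case_result (\<lambda>H. \<exists>A' D'. relax_inv c d k A' D' H \<and> blue_count A' < blue_count A)
        (\<forall>u\<in>V. mark A u \<noteq> NBlue)) H1"
      by (rule wp_seq[OF wp_relax_edges[OF relax_edges_start[OF I1 \<open>v \<notin> isolated\<close>]]])
        (auto elim!: wp_mono[OF wp_relax_unroot1] split: result.splits)
  qed (fastforce intro!: wp_skip)
qed simp

lemma wp_Relax_loop:
  assumes "relax_inv c d k A D G"
  shows "wp (Loop Relax) (case_result (\<lambda>H. \<exists>A' D'. relax_inv c d k A' D' H \<and>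
    (\<forall>u\<in>V. mark A' u \<noteq> NBlue)) False) G"
proof -
  have "wp (Loop Relax) (case_result (\<lambda>H. \<exists>A'. (\<exists>D'. relax_inv c d k A' D' H) \<and>
      (\<forall>u\<in>V. mark A' u \<noteq> NBlue)) False) G"
    using assms
    by (intro wp_loop[where I = "\<lambda>A H. \<exists>D. relax_inv c d k A D H" and \<mu> = blue_count])
      (blast, fastforce elim!: wp_mono[OF wp_Relax] split: result.splits)
  then show ?thesis by (rule wp_mono) (auto split: result.splits)
qed

definition grey_count :: "astate \<Rightarrow> nat" where
  "grey_count A = card {u\<in>V. mark A u = NGrey}"

definition blue_out :: "astate \<Rightarrow> nat \<Rightarrow> nat" where
  "blue_out A v = card {e\<in>out_edges v. edge_mark A e = EBlue}"

definition clean_inv :: "nat \<Rightarrow> nat \<Rightarrow> nat \<Rightarrow> astate \<Rightarrow> estimate \<Rightarrow> hgraph \<Rightarrow> bool" where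
  "clean_inv c d k A D H \<longleftrightarrow> repr c d A H \<and> (\<forall>u\<in>V. lab A u = est_lab D u) \<and>
     walk_bound (Suc k) D \<and> walk_realised D \<and> counter A = int (rounds - Suc k) \<and> Suc k \<le> rounds \<and>
     relax_marks A \<and> no_root A \<and> (\<forall>e\<in>E. edge_mark_ok A e)"

definition clean_node_inv :: "nat \<Rightarrow> nat \<Rightarrow> nat \<Rightarrow> nat \<Rightarrow> nat \<Rightarrow> astate \<Rightarrow> estimate \<Rightarrow> hgraph \<Rightarrow> bool" where
  "clean_node_inv c d k v N A D H \<longleftrightarrow> repr c d A H \<and> (\<forall>u\<in>V. lab A u = est_lab D u) \<and>
     walk_bound (Suc k) D \<and> walk_realised D \<and> counter A = int (rounds - Suc k) \<and> Suc k \<le> rounds \<and>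
     relax_marks A \<and> v \<in> V \<and> v \<notin> isolated \<and> mark A v = NBlue \<and> sole_root A v \<and> grey_count A = N \<and>
     (\<forall>e\<in>E. src G0 e \<noteq> v \<longrightarrow> edge_mark_ok A e) \<and>
     (\<forall>e\<in>E. src G0 e = v \<longrightarrow> edge_mark A e \<in> {EUnmarked, EBlue})"

definition round_inv :: "nat \<Rightarrow> nat \<Rightarrow> nat \<Rightarrow> astate \<Rightarrow> estimate \<Rightarrow> hgraph \<Rightarrow> bool" where
  "round_inv c d k A D H \<longleftrightarrow> repr c d A H \<and> (\<forall>u\<in>V. lab A u = est_lab D u) \<and>
     walk_bound k D \<and> walk_realised D \<and> counter A = int (rounds - k) \<and> k \<le> rounds \<and>
     (\<forall>u\<in>V. u \<notin> isolated \<longrightarrow> mark A u = NBlue) \<and>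
     (\<forall>u\<in>V. u \<in> isolated \<longrightarrow> mark A u \<in> {NBlue, NUnmarked}) \<and>
     no_root A \<and> (\<forall>e\<in>E. edge_mark A e = EUnmarked)"

text \<open>Once no node is blue, every edge has been relaxed in this round.\<close>
lemma relax_inv_clean_inv:
  assumes I: "relax_inv c d k A D H" and no_blue: "\<forall>u\<in>V. mark A u \<noteq> NBlue"
  shows "clean_inv c d k A D H"
proof -
  have "edge_bound k D e" if e: "e \<in> E" for e
  proof -
    have "mark A (src G0 e) = NGrey"
      using I no_blue edge_ends(1)[OF e] edge_ends_not_isolated(1)[OF e]
      unfolding relax_inv_def relax_core_def relax_marks_def by auto
    then show ?thesis using I e unfolding relax_inv_def edge_mark_ok_def by auto
  qed
  then have "walk_bound (Suc k) D" using walk_bound_Suc I unfolding relax_inv_def relax_core_def by blast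
  then show ?thesis using I unfolding relax_inv_def relax_core_def clean_inv_def by auto
qed

lemma wp_clean_root2:
  assumes I: "clean_inv c d k A D G"
  shows "wp (R root2) (case_result
    (\<lambda>H. \<exists>v A'. clean_node_inv c d k v (grey_count A') A' D H \<and> grey_count A' < grey_count A)
    (\<forall>u\<in>V. mark A u \<noteq> NGrey)) G"
proof (rule wp_rule)
  have repr: "repr c d A G" using I unfolding clean_inv_def by blast
  fix H assume "apply_rule root2 G H"
  then obtain v where v: "v \<in> V" "mark A v = NGrey"
    and repr': "repr c d (A\<lparr>mark := (mark A)(v := NBlue), rooted := (rooted A)(v := True)\<rparr>) H"
    using repr_root2[OF repr] by blast
  let ?A = "A\<lparr>mark := (mark A)(v := NBlue), rooted := (rooted A)(v := True)\<rparr>"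
  have "v \<notin> isolated" using I v unfolding clean_inv_def relax_marks_def by auto
  then have "clean_node_inv c d k v (grey_count ?A) ?A D H"
    using I repr' v
    unfolding clean_inv_def clean_node_inv_def relax_marks_def sole_root_def no_root_def edge_mark_ok_def
    by auto
  moreover have "grey_count ?A < grey_count A"
    using card_update_less[OF finite_V, of v "mark A" NGrey NBlue] v
    by (simp add: grey_count_def del: fun_upd_apply)
  ultimately show "\<exists>v A'. clean_node_inv c d k v (grey_count A') A' D H \<and> grey_count A' < grey_count A"
    by blast
next
  have repr: "repr c d A G" using I unfolding clean_inv_def by blast
  assume "\<nexists>H. apply_rule root2 G H"
  then show "\<forall>u\<in>V. mark A u \<noteq> NGrey" using root2_applicable[OF repr] by blast
qed

lemma wp_clean_unmark_edge:
  assumes I: "clean_node_inv c d k v N A D G"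
  shows "wp (R unmark_edge) (case_result
    (\<lambda>H. \<exists>A'. clean_node_inv c d k v N A' D H \<and> blue_out A' v < blue_out A v)
    (\<forall>e\<in>E. src G0 e = v \<longrightarrow> edge_mark A e \<noteq> EBlue)) G"
proof (rule wp_rule)
  have repr: "repr c d A G" using I unfolding clean_node_inv_def by blast
  fix H assume "apply_rule unmark_edge G H"
  then obtain e where e: "e \<in> E" "mark A (src G0 e) = NBlue" "rooted A (src G0 e)" "edge_mark A e = EBlue"
    and repr': "repr c d (A\<lparr>edge_mark := (edge_mark A)(e := EUnmarked)\<rparr>) H"
    using repr_unmark_edge[OF repr] by blast
  have v: "src G0 e = v" using sole_root_eq[of A v "src G0 e"] I e edge_ends unfolding clean_node_inv_def by blast
  let ?A = "A\<lparr>edge_mark := (edge_mark A)(e := EUnmarked)\<rparr>"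
  have "clean_node_inv c d k v N ?A D H"
    using I repr' e v
    unfolding clean_node_inv_def relax_marks_def sole_root_def grey_count_def edge_mark_ok_def
    by auto
  moreover have "blue_out ?A v < blue_out A v"
    using card_update_less[OF finite_out_edges[of v], of e "edge_mark A" EBlue EUnmarked] e v
    by (simp add: blue_out_def out_edges_def del: fun_upd_apply)
  ultimately show "\<exists>A'. clean_node_inv c d k v N A' D H \<and> blue_out A' v < blue_out A v" by blast
next
  have repr: "repr c d A G" using I unfolding clean_node_inv_def by blast
  assume none: "\<nexists>H. apply_rule unmark_edge G H"
  have "mark A v = NBlue" "rooted A v" using I unfolding clean_node_inv_def sole_root_def by auto
  then show "\<forall>e\<in>E. src G0 e = v \<longrightarrow> edge_mark A e \<noteq> EBlue"
    using unmark_edge_applicable[OF repr] none by blast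
qed

lemma wp_clean_unmark_loop:
  assumes "clean_node_inv c d k v N A D G"
  shows "wp (Loop (R unmark_edge)) (case_result (\<lambda>H. \<exists>A'. clean_node_inv c d k v N A' D H \<and>
    (\<forall>e\<in>E. src G0 e = v \<longrightarrow> edge_mark A' e \<noteq> EBlue)) False) G"
  by (rule wp_loop[where I = "\<lambda>A. clean_node_inv c d k v N A D" and \<mu> = "\<lambda>A. blue_out A v", OF assms])
    (fastforce elim!: wp_mono[OF wp_clean_unmark_edge] split: result.splits)

lemma wp_clean_unroot2:
  assumes I: "clean_node_inv c d k v N A D G"
    and finished: "\<forall>e\<in>E. src G0 e = v \<longrightarrow> edge_mark A e \<noteq> EBlue"
  shows "wp (R unroot2) (case_result (\<lambda>H. \<exists>A'. clean_inv c d k A' D H \<and> grey_count A' = N) False) G"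
proof (rule wp_rule)
  have repr: "repr c d A G" using I unfolding clean_node_inv_def by blast
  fix H assume "apply_rule unroot2 G H"
  then obtain v' where v': "v' \<in> V" "mark A v' = NBlue" "rooted A v'"
    and repr': "repr c d (A\<lparr>rooted := (rooted A)(v' := False)\<rparr>) H"
    using repr_unroot2[OF repr] by blast
  have "v' = v" using v' I unfolding clean_node_inv_def sole_root_def by auto
  let ?A = "A\<lparr>rooted := (rooted A)(v := False)\<rparr>"
  have "edge_mark_ok ?A e" if "e \<in> E" for e
    using I finished that unfolding clean_node_inv_def edge_mark_ok_def by (cases "src G0 e = v") auto
  then have "clean_inv c d k ?A D H"
    using I repr' v' \<open>v' = v\<close>
    unfolding clean_inv_def clean_node_inv_def sole_root_def no_root_def relax_marks_def by auto
  moreover have "grey_count ?A = N" using I unfolding clean_node_inv_def grey_count_def by simp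
  ultimately show "\<exists>A'. clean_inv c d k A' D H \<and> grey_count A' = N" by blast
next
  have repr: "repr c d A G" using I unfolding clean_node_inv_def by blast
  assume "\<nexists>H. apply_rule unroot2 G H"
  then show False using unroot2_applicable[OF repr] I unfolding clean_node_inv_def sole_root_def by auto
qed

lemma wp_Clean:
  assumes I: "clean_inv c d k A D G"
  shows "wp Clean (case_result (\<lambda>H. \<exists>A'. clean_inv c d k A' D H \<and> grey_count A' < grey_count A)
    (\<forall>u\<in>V. mark A u \<noteq> NGrey)) G"
  unfolding Clean_def
proof (rule wp_seq[OF wp_clean_root2[OF I]])
  fix H1 assume "\<exists>v A'. clean_node_inv c d k v (grey_count A') A' D H1 \<and> grey_count A' < grey_count A"
  then obtain v A1 where I1: "clean_node_inv c d k v (grey_count A1) A1 D H1"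
    and less: "grey_count A1 < grey_count A" by blast
  show "wp (Seq (Loop (R unmark_edge)) (R unroot2))
    (case_result (\<lambda>H. \<exists>A'. clean_inv c d k A' D H \<and> grey_count A' < grey_count A)
      (\<forall>u\<in>V. mark A u \<noteq> NGrey)) H1"
    by (rule wp_seq[OF wp_clean_unmark_loop[OF I1]])
      (use less in \<open>fastforce elim!: wp_mono[OF wp_clean_unroot2] split: result.splits\<close>)+
qed simp

lemma wp_Clean_loop:
  assumes "clean_inv c d k A D G"
  shows "wp (Loop Clean) (case_result (\<lambda>H. \<exists>A'. clean_inv c d k A' D H \<and>
    (\<forall>u\<in>V. mark A' u \<noteq> NGrey)) False) G"
  by (rule wp_loop[where I = "\<lambda>A. clean_inv c d k A D" and \<mu> = grey_count, OF assms])
    (fastforce elim!: wp_mono[OF wp_Clean] split: result.splits)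

lemma clean_inv_round_inv:
  assumes I: "clean_inv c d k A D H" and no_grey: "\<forall>u\<in>V. mark A u \<noteq> NGrey"
  shows "round_inv c d (Suc k) A D H"
proof -
  have blue: "\<forall>u\<in>V. u \<notin> isolated \<longrightarrow> mark A u = NBlue"
    using I no_grey unfolding clean_inv_def relax_marks_def by auto
  have "edge_mark A e = EUnmarked" if e: "e \<in> E" for e
    using I e blue edge_ends(1)[OF e] edge_ends_not_isolated(1)[OF e]
    unfolding clean_inv_def edge_mark_ok_def by auto
  then show ?thesis using I blue unfolding clean_inv_def round_inv_def relax_marks_def by auto
qed

lemma wp_round_decrement:
  assumes I: "round_inv c d k A D G"
  shows "wp (R decrement) (case_result (\<lambda>H. relax_inv c d k (A\<lparr>counter := counter A - 1\<rparr>) D H)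
    (k = rounds)) G"
proof (rule wp_rule)
  have repr: "repr c d A G" using I unfolding round_inv_def by blast
  fix H assume "apply_rule decrement G H"
  then have pos: "counter A > 0" and repr': "repr c d (A\<lparr>counter := counter A - 1\<rparr>) H"
    using repr_decrement[OF repr] by auto
  have "edge_mark_ok (A\<lparr>counter := counter A - 1\<rparr>) e" if e: "e \<in> E" for e
    using I e edge_ends(1)[OF e] edge_ends_not_isolated(1)[OF e]
    unfolding round_inv_def edge_mark_ok_def by auto
  then show "relax_inv c d k (A\<lparr>counter := counter A - 1\<rparr>) D H"
    using I repr' pos unfolding round_inv_def relax_inv_def relax_core_def relax_marks_def no_root_def
    by auto
next
  have repr: "repr c d A G" using I unfolding round_inv_def by blast
  assume "\<nexists>H. apply_rule decrement G H"
  then have "\<not> counter A > 0" using decrement_applicable[OF repr] by blast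
  then show "k = rounds" using I unfolding round_inv_def by auto
qed

definition round_cmd :: cmd where
  "round_cmd = Seq (R decrement) (Seq (Loop Relax) (Loop Clean))"

lemma wp_round:
  assumes I: "round_inv c d k A D G"
  shows "wp round_cmd (case_result (\<lambda>H. \<exists>A' D'. round_inv c d (Suc k) A' D' H) (k = rounds)) G"
  unfolding round_cmd_def
proof (rule wp_seq[OF wp_round_decrement[OF I]])
  fix H1 assume "relax_inv c d k (A\<lparr>counter := counter A - 1\<rparr>) D H1"
  then show "wp (Seq (Loop Relax) (Loop Clean))
    (case_result (\<lambda>H. \<exists>A' D'. round_inv c d (Suc k) A' D' H) (k = rounds)) H1"
  proof (rule wp_seq[OF wp_Relax_loop])
    fix H2 assume "\<exists>A' D'. relax_inv c d k A' D' H2 \<and> (\<forall>u\<in>V. mark A' u \<noteq> NBlue)"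
    then obtain A2 D2 where "clean_inv c d k A2 D2 H2" using relax_inv_clean_inv by blast
    then show "wp (Loop Clean) (case_result (\<lambda>H. \<exists>A' D'. round_inv c d (Suc k) A' D' H) (k = rounds)) H2"
      by (rule wp_mono[OF wp_Clean_loop]) (force split: result.splits intro: clean_inv_round_inv)
  qed simp
qed simp

lemma round_inv_le: "round_inv c d k A D H \<Longrightarrow> k \<le> rounds"
  unfolding round_inv_def by simp

lemma wp_rounds:
  assumes "round_inv c d k A D G"
  shows "wp (Loop round_cmd) (case_result (\<lambda>H. \<exists>A' D'. round_inv c d rounds A' D' H) False) G"
proof -
  have "wp (Loop round_cmd) (case_result (\<lambda>H. \<exists>k'. (\<exists>A' D'. round_inv c d k' A' D' H) \<and> k' = rounds) False) G"
  proof (rule wp_loop[where I = "\<lambda>k H. \<exists>A D. round_inv c d k A D H" and \<mu> = "\<lambda>k. rounds - k"])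
    fix k' G' assume "\<exists>A D. round_inv c d k' A D G'"
    then obtain A' D' where "round_inv c d k' A' D' G'" by blast
    then show "wp round_cmd (case_result (\<lambda>H. \<exists>k''. (\<exists>A D. round_inv c d k'' A D H) \<and>
        rounds - k'' < rounds - k') (k' = rounds)) G'"
      by (rule wp_mono[OF wp_round]) (force split: result.splits dest: round_inv_le)
  qed (use assms in blast)
  then show ?thesis by (rule wp_mono) (auto split: result.splits)
qed

text \<open>\<open>B\<close> is the set of non-root nodes counted so far.\<close>
definition count_inv :: "nat \<Rightarrow> nat \<Rightarrow> astate \<Rightarrow> nat set \<Rightarrow> hgraph \<Rightarrow> bool" where
  "count_inv c d A B H \<longleftrightarrow> repr c d A H \<and> B \<subseteq> V - {r} \<and>
    (\<forall>u\<in>V. lab A u = (if u = r then nlab G0 r @ [AInt 0]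
                       else if u \<in> B then nlab G0 u @ [AStr ''f''] else nlab G0 u)) \<and>
    (\<forall>u\<in>V. mark A u = (if u = r \<or> u \<in> B then NBlue else NGrey)) \<and> no_root A \<and>
    (\<forall>e\<in>E. edge_mark A e = EUnmarked) \<and> counter A = int (card B)"

lemma wp_count:
  assumes I: "count_inv c d A B G"
  shows "wp (R count) (case_result
    (\<lambda>H. \<exists>A' B'. count_inv c d A' B' H \<and> card (V - B') < card (V - B)) (B = V - {r})) G"
proof (rule wp_rule)
  have repr: "repr c d A G" using I unfolding count_inv_def by blast
  fix H assume "apply_rule count G H"
  then obtain v where v: "v \<in> V" "mark A v = NGrey"
    and repr': "repr c d (A\<lparr>lab := (lab A)(v := lab A v @ [AStr ''f'']), mark := (mark A)(v := NBlue),
      counter := counter A + 1\<rparr>) H"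
    using repr_count[OF repr] by blast
  have new: "v \<noteq> r" "v \<notin> B" using I v unfolding count_inv_def by (auto split: if_splits)
  have "finite B" using I finite_V unfolding count_inv_def by (meson finite_Diff finite_subset)
  then have "count_inv c d (A\<lparr>lab := (lab A)(v := lab A v @ [AStr ''f'']), mark := (mark A)(v := NBlue),
      counter := counter A + 1\<rparr>) (insert v B) H"
    using I repr' v new unfolding count_inv_def no_root_def by auto
  moreover have "card (V - insert v B) < card (V - B)"
  proof -
    have "V - insert v B = (V - B) - {v}" by auto
    then show ?thesis using v new finite_V by (metis DiffI card_Diff1_less finite_Diff)
  qed
  ultimately show "\<exists>A' B'. count_inv c d A' B' H \<and> card (V - B') < card (V - B)" by blast
next
  have repr: "repr c d A G" using I unfolding count_inv_def by blast
  assume "\<nexists>H. apply_rule count G H"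
  then have "\<forall>u\<in>V. mark A u \<noteq> NGrey" using count_applicable[OF repr] by blast
  then show "B = V - {r}" using I unfolding count_inv_def by (auto split: if_splits)
qed

lemma count_inv_round_inv: "count_inv c d A (V - {r}) H \<Longrightarrow> round_inv c d 0 A init_est H"
  using root_node finite_V walk_bound_init walk_realised_init
  unfolding count_inv_def round_inv_def est_lab_def init_est_def no_root_def by auto

lemma wp_count_loop:
  assumes "repr c d init_state G"
  shows "wp (Loop (R count)) (case_result (\<lambda>H. \<exists>A. round_inv c d 0 A init_est H) False) G"
proof -
  have "count_inv c d init_state {} G"
    using assms unfolding count_inv_def init_state_def no_root_def by auto
  then have "wp (Loop (R count)) (case_result (\<lambda>H. \<exists>B. (\<exists>A. count_inv c d A B H) \<and> B = V - {r}) False) G"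
    by (intro wp_loop[where I = "\<lambda>B H. \<exists>A. count_inv c d A B H" and \<mu> = "\<lambda>B. card (V - B)"])
      (blast, fastforce elim!: wp_mono[OF wp_count] split: result.splits)
  then show ?thesis by (rule wp_mono) (auto split: result.splits intro: count_inv_round_inv)
qed

definition check_marks :: "astate \<Rightarrow> bool" where
  "check_marks A \<longleftrightarrow> (\<forall>u\<in>V. u \<notin> isolated \<longrightarrow> mark A u \<in> {NBlue, NGrey}) \<and>
     (\<forall>u\<in>V. u \<in> isolated \<longrightarrow> mark A u \<in> {NBlue, NUnmarked, NGrey})"

text \<open>The counter doubles as the flag: \<open>-1\<close> records that a relaxable edge has been seen.\<close>
definition check_core :: "nat \<Rightarrow> nat \<Rightarrow> estimate \<Rightarrow> astate \<Rightarrow> hgraph \<Rightarrow> bool" where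
  "check_core c d D A H \<longleftrightarrow> repr c d A H \<and> (\<forall>u\<in>V. lab A u = est_lab D u) \<and>
     (counter A = 0 \<or> counter A = -1) \<and> (counter A = -1 \<longrightarrow> (\<exists>e\<in>E. relaxable D e)) \<and>
     (\<forall>e\<in>E. edge_mark A e = EBlue \<and> relaxable D e \<longrightarrow> counter A = -1) \<and> check_marks A"

definition check_inv :: "nat \<Rightarrow> nat \<Rightarrow> estimate \<Rightarrow> astate \<Rightarrow> hgraph \<Rightarrow> bool" where
  "check_inv c d D A H \<longleftrightarrow> check_core c d D A H \<and> no_root A \<and> (\<forall>e\<in>E. edge_mark_ok A e)"

definition check_edges_inv :: "nat \<Rightarrow> nat \<Rightarrow> estimate \<Rightarrow> nat \<Rightarrow> nat \<Rightarrow> astate \<Rightarrow> hgraph \<Rightarrow> bool" where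
  "check_edges_inv c d D v N A H \<longleftrightarrow> check_core c d D A H \<and> v \<in> V \<and> mark A v = NBlue \<and>
     sole_root A v \<and> blue_count A = N \<and> (\<forall>e\<in>E. src G0 e \<noteq> v \<longrightarrow> edge_mark_ok A e) \<and>
     (\<forall>e\<in>E. src G0 e = v \<longrightarrow> edge_mark A e \<in> {EUnmarked, EBlue})"

definition check_red_inv ::
    "nat \<Rightarrow> nat \<Rightarrow> estimate \<Rightarrow> nat \<Rightarrow> nat \<Rightarrow> nat \<Rightarrow> nat \<Rightarrow> astate \<Rightarrow> hgraph \<Rightarrow> bool" where
  "check_red_inv c d D v N M e0 A H \<longleftrightarrow> check_core c d D A H \<and> v \<in> V \<and> mark A v = NBlue \<and>
     sole_root A v \<and> blue_count A = N \<and> e0 \<in> E \<and> src G0 e0 = v \<and> edge_mark A e0 = ERed \<and>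
     (\<forall>e\<in>E. src G0 e \<noteq> v \<longrightarrow> edge_mark_ok A e) \<and>
     (\<forall>e\<in>E. src G0 e = v \<and> e \<noteq> e0 \<longrightarrow> edge_mark A e \<in> {EUnmarked, EBlue}) \<and> unmarked_out A v < M"

lemma check_red_inv_red:
  "check_red_inv c d D v N M e0 A H \<Longrightarrow> e \<in> E \<Longrightarrow> edge_mark A e = ERed \<Longrightarrow> e = e0"
  unfolding check_red_inv_def edge_mark_ok_def by (metis emark.distinct insertE empty_iff)

lemma round_inv_check_inv: "round_inv c d rounds A D H \<Longrightarrow> check_inv c d D A H"
  using edge_ends(1) edge_ends_not_isolated(1)
  unfolding round_inv_def check_inv_def check_core_def check_marks_def edge_mark_ok_def by fastforce

lemma wp_check_root1:
  assumes I: "check_inv c d D A G"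
  shows "wp (R root1) (case_result (\<lambda>H. \<exists>v A'. check_edges_inv c d D v (blue_count A) A' H)
    (\<forall>u\<in>V. mark A u \<noteq> NBlue)) G"
proof (rule wp_rule)
  have repr: "repr c d A G" using I unfolding check_inv_def check_core_def by blast
  fix H assume "apply_rule root1 G H"
  then obtain v where v: "v \<in> V" "mark A v = NBlue"
    and repr': "repr c d (A\<lparr>rooted := (rooted A)(v := True)\<rparr>) H"
    using repr_root1[OF repr] by blast
  have "check_edges_inv c d D v (blue_count A) (A\<lparr>rooted := (rooted A)(v := True)\<rparr>) H"
    using I repr' v
    unfolding check_inv_def check_edges_inv_def check_core_def check_marks_def sole_root_def
      no_root_def blue_count_def edge_mark_ok_def
    by auto
  then show "\<exists>v A'. check_edges_inv c d D v (blue_count A) A' H" by blast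
next
  have repr: "repr c d A G" using I unfolding check_inv_def check_core_def by blast
  assume "\<nexists>H. apply_rule root1 G H"
  then show "\<forall>u\<in>V. mark A u \<noteq> NBlue" using root1_applicable[OF repr] by blast
qed

lemma wp_check_unmarked_edge:
  assumes I: "check_edges_inv c d D v N A G"
  shows "wp (R unmarked_edge) (case_result (\<lambda>H. \<exists>e0 A'. check_red_inv c d D v N (unmarked_out A v) e0 A' H)
    (\<forall>e\<in>E. src G0 e = v \<longrightarrow> edge_mark A e \<noteq> EUnmarked)) G"
proof (rule wp_rule)
  have repr: "repr c d A G" using I unfolding check_edges_inv_def check_core_def by blast
  fix H assume "apply_rule unmarked_edge G H"
  then obtain e where e: "e \<in> E" "mark A (src G0 e) = NBlue" "rooted A (src G0 e)" "edge_mark A e = EUnmarked"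
    and repr': "repr c d (A\<lparr>edge_mark := (edge_mark A)(e := ERed)\<rparr>) H"
    using repr_unmarked_edge[OF repr] by blast
  have "src G0 e = v" using sole_root_eq[of A v "src G0 e"] I e edge_ends unfolding check_edges_inv_def by blast
  then have "check_red_inv c d D v N (unmarked_out A v) e (A\<lparr>edge_mark := (edge_mark A)(e := ERed)\<rparr>) H"
    using I repr' e unmarked_out_less[OF e(1) _ e(4)]
    unfolding check_edges_inv_def check_red_inv_def check_core_def check_marks_def sole_root_def
      blue_count_def edge_mark_ok_def
    by auto
  then show "\<exists>e0 A'. check_red_inv c d D v N (unmarked_out A v) e0 A' H" by blast
next
  have repr: "repr c d A G" using I unfolding check_edges_inv_def check_core_def by blast
  assume none: "\<nexists>H. apply_rule unmarked_edge G H"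
  have "mark A v = NBlue" "rooted A v" using I unfolding check_edges_inv_def sole_root_def by auto
  then show "\<forall>e\<in>E. src G0 e = v \<longrightarrow> edge_mark A e \<noteq> EUnmarked"
    using unmarked_edge_applicable[OF repr] none by blast
qed

lemma wp_check_reduce:
  assumes I: "check_red_inv c d D v N M e0 A G"
  shows "wp (R reduce) (case_result (\<lambda>_. relaxable D e0) (\<not> relaxable D e0)) G"
proof (rule wp_rule)
  have repr: "repr c d A G" and lab: "\<forall>u\<in>V. lab A u = est_lab D u"
    using I unfolding check_red_inv_def check_core_def by blast+
  fix H assume "apply_rule reduce G H"
  then obtain e x y s t where e: "e \<in> E" "edge_mark A e = ERed" "lab A (src G0 e) = x @ [AInt s]"
    "lab A (tgt G0 e) = y @ [AInt t]" "s + wt G0 e < t"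
    using repr_reduce[OF repr] by blast
  have "e = e0" using check_red_inv_red[OF I e(1,2)] .
  moreover have "D (src G0 e) = Some s" "D (tgt G0 e) = Some t"
    using e(3,4) lab edge_ends[OF e(1)] by (auto simp: est_lab_Int)
  ultimately show "relaxable D e0" using e(5) unfolding relaxable_def by auto
next
  have repr: "repr c d A G" and lab: "\<forall>u\<in>V. lab A u = est_lab D u"
    using I unfolding check_red_inv_def check_core_def by blast+
  assume none: "\<nexists>H. apply_rule reduce G H"
  show "\<not> relaxable D e0"
  proof
    assume "relaxable D e0"
    then obtain s t where st: "D (src G0 e0) = Some s" "D (tgt G0 e0) = Some t" "s + wt G0 e0 < t"
      unfolding relaxable_def by blast
    have e0: "e0 \<in> E" "src G0 e0 = v" "edge_mark A e0 = ERed" "mark A v = NBlue" "rooted A v"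
      using I unfolding check_red_inv_def sole_root_def by auto
    have "lab A (src G0 e0) = nlab G0 (src G0 e0) @ [AInt s]" "lab A (tgt G0 e0) = nlab G0 (tgt G0 e0) @ [AInt t]"
      using st lab edge_ends[OF e0(1)] by (auto simp: est_lab_def)
    then show False using reduce_applicable[OF repr e0(1)] e0 st(3) none by auto
  qed
qed

lemma wp_check_set_flag:
  assumes I: "check_red_inv c d D v N M e0 A G" and "relaxable D e0"
  shows "wp (R set_flag) (case_result (\<lambda>H. \<exists>A'. check_red_inv c d D v N M e0 A' H \<and> counter A' = -1) False) G"
proof (rule wp_rule)
  have repr: "repr c d A G" using I unfolding check_red_inv_def check_core_def by blast
  fix H assume "apply_rule set_flag G H"
  then have "repr c d (A\<lparr>counter := -1\<rparr>) H" using repr_set_flag[OF repr] by blast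
  moreover have "e0 \<in> E" using I unfolding check_red_inv_def by blast
  ultimately have "check_red_inv c d D v N M e0 (A\<lparr>counter := -1\<rparr>) H"
    using I assms(2)
    unfolding check_red_inv_def check_core_def check_marks_def sole_root_def blue_count_def
      edge_mark_ok_def unmarked_out_def
    by auto
  then show "\<exists>A'. check_red_inv c d D v N M e0 A' H \<and> counter A' = -1" by fastforce
next
  have repr: "repr c d A G" using I unfolding check_red_inv_def check_core_def by blast
  assume "\<nexists>H. apply_rule set_flag G H"
  then show False using set_flag_applicable[OF repr] by blast
qed

lemma wp_check_finish:
  assumes I: "check_red_inv c d D v N M e0 A G" and flagged: "relaxable D e0 \<longrightarrow> counter A = -1"
  shows "wp (R finish) (case_result (\<lambda>H. \<exists>A'. check_edges_inv c d D v N A' H \<and> unmarked_out A' v < M) False) G"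
proof (rule wp_rule)
  have repr: "repr c d A G" using I unfolding check_red_inv_def check_core_def by blast
  fix H assume "apply_rule finish G H"
  then obtain e where e: "e \<in> E" "edge_mark A e = ERed"
    and repr': "repr c d (A\<lparr>edge_mark := (edge_mark A)(e := EBlue)\<rparr>) H"
    using repr_finish[OF repr] by blast
  have e0: "e = e0" using check_red_inv_red[OF I e(1,2)] .
  let ?A = "A\<lparr>edge_mark := (edge_mark A)(e0 := EBlue)\<rparr>"
  have "unmarked_out ?A v = unmarked_out A v"
    unfolding unmarked_out_def using e e0 by (intro arg_cong[where f = card]) auto
  moreover have "check_edges_inv c d D v N ?A H"
    using I repr' e0 flagged
    unfolding check_red_inv_def check_edges_inv_def check_core_def check_marks_def sole_root_def
      blue_count_def edge_mark_ok_def
    by auto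
  ultimately show "\<exists>A'. check_edges_inv c d D v N A' H \<and> unmarked_out A' v < M"
    using I unfolding check_red_inv_def by auto
next
  have repr: "repr c d A G" using I unfolding check_red_inv_def check_core_def by blast
  assume none: "\<nexists>H. apply_rule finish G H"
  have "e0 \<in> E" "mark A (src G0 e0) = NBlue" "rooted A (src G0 e0)" "edge_mark A e0 = ERed"
    using I unfolding check_red_inv_def sole_root_def by auto
  then show False using finish_applicable[OF repr] none by blast
qed

lemma wp_check_unroot1:
  assumes I: "check_edges_inv c d D v N A G"
    and finished: "\<forall>e\<in>E. src G0 e = v \<longrightarrow> edge_mark A e \<noteq> EUnmarked"
  shows "wp (R unroot1) (case_result (\<lambda>H. \<exists>A'. check_inv c d D A' H \<and> blue_count A' < N) False) G"
proof (rule wp_rule)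
  have repr: "repr c d A G" using I unfolding check_edges_inv_def check_core_def by blast
  fix H assume "apply_rule unroot1 G H"
  then obtain v' where v': "v' \<in> V" "mark A v' = NBlue" "rooted A v'"
    and repr': "repr c d (A\<lparr>mark := (mark A)(v' := NGrey), rooted := (rooted A)(v' := False)\<rparr>) H"
    using repr_unroot1[OF repr] by blast
  have "v' = v" using v' I unfolding check_edges_inv_def sole_root_def by auto
  let ?A = "A\<lparr>mark := (mark A)(v := NGrey), rooted := (rooted A)(v := False)\<rparr>"
  have "edge_mark_ok ?A e" if "e \<in> E" for e
    using I finished that unfolding check_edges_inv_def edge_mark_ok_def by (cases "src G0 e = v") auto
  then have "check_inv c d D ?A H"
    using I repr' v' \<open>v' = v\<close>
    unfolding check_inv_def check_edges_inv_def check_core_def check_marks_def sole_root_def no_root_def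
    by auto
  moreover have "blue_count ?A < N"
    using blue_count_less[of v A NGrey] v' \<open>v' = v\<close> I unfolding check_edges_inv_def blue_count_def by auto
  ultimately show "\<exists>A'. check_inv c d D A' H \<and> blue_count A' < N" by blast
next
  have repr: "repr c d A G" using I unfolding check_edges_inv_def check_core_def by blast
  assume "\<nexists>H. apply_rule unroot1 G H"
  then show False using unroot1_applicable[OF repr] I unfolding check_edges_inv_def sole_root_def by auto
qed

definition check_edge_cmd :: cmd where
  "check_edge_cmd = Seq (R unmarked_edge) (Seq (If (R reduce) (R set_flag) Skip) (R finish))"

definition check_node_cmd :: cmd where
  "check_node_cmd = Seq (R root1) (Seq (Loop check_edge_cmd) (R unroot1))"

lemma wp_check_edge:
  assumes I: "check_edges_inv c d D v N A G"
  shows "wp check_edge_cmd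
    (case_result (\<lambda>H. \<exists>A'. check_edges_inv c d D v N A' H \<and> unmarked_out A' v < unmarked_out A v)
      (\<forall>e\<in>E. src G0 e = v \<longrightarrow> edge_mark A e \<noteq> EUnmarked)) G"
  unfolding check_edge_cmd_def
proof (rule wp_seq[OF wp_check_unmarked_edge[OF I]])
  fix H1 assume "\<exists>e0 A'. check_red_inv c d D v N (unmarked_out A v) e0 A' H1"
  then obtain e0 A1 where I1: "check_red_inv c d D v N (unmarked_out A v) e0 A1 H1" by blast
  let ?M = "\<lambda>H. \<exists>A'. check_red_inv c d D v N (unmarked_out A v) e0 A' H \<and> (relaxable D e0 \<longrightarrow> counter A' = -1)"
  have "wp (If (R reduce) (R set_flag) Skip) (case_result ?M False) H1"
  proof (rule wp_if[OF wp_check_reduce[OF I1]])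
    assume "relaxable D e0"
    then show "wp (R set_flag) (case_result ?M False) H1"
      by (rule wp_mono[OF wp_check_set_flag[OF I1]]) (auto split: result.splits)
  qed (use I1 in \<open>auto intro!: wp_skip\<close>)
  then show "wp (Seq (If (R reduce) (R set_flag) Skip) (R finish))
    (case_result (\<lambda>H. \<exists>A'. check_edges_inv c d D v N A' H \<and> unmarked_out A' v < unmarked_out A v)
      (\<forall>e\<in>E. src G0 e = v \<longrightarrow> edge_mark A e \<noteq> EUnmarked)) H1"
    by (rule wp_seq) (fastforce elim!: wp_mono[OF wp_check_finish] split: result.splits)+
qed simp

lemma wp_check_node:
  assumes I: "check_inv c d D A G"
  shows "wp check_node_cmd (case_result (\<lambda>H. \<exists>A'. check_inv c d D A' H \<and> blue_count A' < blue_count A)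
    (\<forall>u\<in>V. mark A u \<noteq> NBlue)) G"
  unfolding check_node_cmd_def
proof (rule wp_seq[OF wp_check_root1[OF I]])
  fix H1 assume "\<exists>v A'. check_edges_inv c d D v (blue_count A) A' H1"
  then obtain v A1 where I1: "check_edges_inv c d D v (blue_count A) A1 H1" by blast
  have "wp (Loop check_edge_cmd) (case_result (\<lambda>H. \<exists>A'. check_edges_inv c d D v (blue_count A) A' H \<and>
      (\<forall>e\<in>E. src G0 e = v \<longrightarrow> edge_mark A' e \<noteq> EUnmarked)) False) H1"
    by (rule wp_loop[where I = "check_edges_inv c d D v (blue_count A)" and \<mu> = "\<lambda>A. unmarked_out A v", OF I1])
      (fastforce elim!: wp_mono[OF wp_check_edge] split: result.splits)
  then show "wp (Seq (Loop check_edge_cmd) (R unroot1))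
    (case_result (\<lambda>H. \<exists>A'. check_inv c d D A' H \<and> blue_count A' < blue_count A)
      (\<forall>u\<in>V. mark A u \<noteq> NBlue)) H1"
    by (rule wp_seq) (fastforce elim!: wp_mono[OF wp_check_unroot1] split: result.splits)+
qed simp

lemma check_inv_exit:
  assumes I: "check_inv c d D A H" and no_blue: "\<forall>u\<in>V. mark A u \<noteq> NBlue"
  shows "\<forall>e\<in>E. edge_mark A e = EBlue" "counter A = -1 \<longleftrightarrow> (\<exists>e\<in>E. relaxable D e)" "mark A r = NGrey"
proof -
  have grey: "\<forall>u\<in>V. u \<notin> isolated \<longrightarrow> mark A u = NGrey"
    using I no_blue unfolding check_inv_def check_core_def check_marks_def by auto
  show blue: "\<forall>e\<in>E. edge_mark A e = EBlue"
    using I grey edge_ends(1) edge_ends_not_isolated(1) unfolding check_inv_def edge_mark_ok_def by auto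
  show "counter A = -1 \<longleftrightarrow> (\<exists>e\<in>E. relaxable D e)" using I blue unfolding check_inv_def check_core_def by auto
  show "mark A r = NGrey" using grey root_node root_not_isolated by auto
qed

lemma wp_check_flag:
  assumes I: "check_inv c d D A G"
  shows "wp (R flag) (case_result (\<lambda>_. counter A = -1) (counter A \<noteq> -1)) G"
proof (rule wp_rule)
  have repr: "repr c d A G" using I unfolding check_inv_def check_core_def by blast
  show "counter A = -1" if "apply_rule flag G H" for H using repr_flag[OF repr that] .
  show "counter A \<noteq> -1" if "\<nexists>H. apply_rule flag G H" using flag_applicable[OF repr] that by blast
qed

definition restore_inv :: "estimate \<Rightarrow> astate \<Rightarrow> hgraph \<Rightarrow> bool" where
  "restore_inv D A H \<longleftrightarrow> repr_final A H \<and> (\<forall>u\<in>V. lab A u = est_lab D u) \<and>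
     (\<forall>u\<in>V. mark A u \<in> {NGrey, NUnmarked}) \<and> (\<forall>u\<in>V. rooted A u = (u = r)) \<and>
     (\<forall>e\<in>E. edge_mark A e = EBlue)"

lemma wp_delete_counter:
  assumes I: "check_inv c d D A G" and no_blue: "\<forall>u\<in>V. mark A u \<noteq> NBlue"
  shows "wp (R delete_counter) (case_result (\<lambda>H. \<exists>A'. restore_inv D A' H) False) G"
proof (rule wp_rule)
  have repr: "repr c d A G" using I unfolding check_inv_def check_core_def by blast
  note exit = check_inv_exit[OF I no_blue]
  fix H assume "apply_rule delete_counter G H"
  then have "repr_final (A\<lparr>rooted := (rooted A)(r := True)\<rparr>) H" using repr_delete_counter[OF repr] by blast
  then have "restore_inv D (A\<lparr>rooted := (rooted A)(r := True)\<rparr>) H"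
    using I no_blue exit unfolding restore_inv_def check_inv_def check_core_def check_marks_def no_root_def
    by auto
  then show "\<exists>A'. restore_inv D A' H" by blast
next
  have repr: "repr c d A G" using I unfolding check_inv_def check_core_def by blast
  assume "\<nexists>H. apply_rule delete_counter G H"
  then show False using delete_counter_applicable[OF repr check_inv_exit(3)[OF I no_blue]] by blast
qed

lemma wp_restore_marks:
  assumes I: "restore_inv D A G"
  shows "wp (Loop (R no_deg_inv)) (case_result (\<lambda>H. \<exists>A'. restore_inv D A' H \<and> (\<forall>u\<in>V. mark A' u = NGrey)) False) G"
proof -
  have "wp (Loop (R no_deg_inv)) (case_result (\<lambda>H. \<exists>A'. restore_inv D A' H \<and>
      (\<forall>u\<in>V. mark A' u \<noteq> NUnmarked)) False) G"
  proof (rule wp_loop[where I = "restore_inv D" and \<mu> = "\<lambda>A. card {u\<in>V. mark A u = NUnmarked}", OF I])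
    fix A G' assume I': "restore_inv D A G'"
    then have repr: "repr_final A G'" unfolding restore_inv_def by blast
    show "wp (R no_deg_inv) (case_result (\<lambda>H. \<exists>A'. restore_inv D A' H \<and>
        card {u\<in>V. mark A' u = NUnmarked} < card {u\<in>V. mark A u = NUnmarked})
      (\<forall>u\<in>V. mark A u \<noteq> NUnmarked)) G'"
    proof (rule wp_rule)
      fix H assume "apply_rule no_deg_inv G' H"
      then obtain v where v: "v \<in> V" "mark A v = NUnmarked"
        and repr': "repr_final (A\<lparr>mark := (mark A)(v := NGrey)\<rparr>) H"
        using repr_no_deg_inv[OF repr] by blast
      have "restore_inv D (A\<lparr>mark := (mark A)(v := NGrey)\<rparr>) H" using I' repr' unfolding restore_inv_def by auto
      moreover have "card {u\<in>V. ((mark A)(v := NGrey)) u = NUnmarked} < card {u\<in>V. mark A u = NUnmarked}"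
        using card_update_less[OF finite_V, of v "mark A" NUnmarked NGrey] v by (simp del: fun_upd_apply)
      ultimately show "\<exists>A'. restore_inv D A' H \<and>
          card {u\<in>V. mark A' u = NUnmarked} < card {u\<in>V. mark A u = NUnmarked}"
        by fastforce
    next
      assume "\<nexists>H. apply_rule no_deg_inv G' H"
      then show "\<forall>u\<in>V. mark A u \<noteq> NUnmarked" using no_deg_inv_applicable[OF repr] by blast
    qed
  qed
  moreover have "\<forall>u\<in>V. mark A' u = NGrey"
    if "restore_inv D A' H" "\<forall>u\<in>V. mark A' u \<noteq> NUnmarked" for A' H
    using that unfolding restore_inv_def by blast
  ultimately show ?thesis by (elim wp_mono) (fastforce split: result.splits)
qed

definition final_post :: "estimate \<Rightarrow> result \<Rightarrow> bool" where
  "final_post D Res \<longleftrightarrow> (if \<exists>e\<in>E. relaxable D e then Res = Fail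
     else (\<exists>A H. Res = Ok H \<and> restore_inv D A H \<and> (\<forall>u\<in>V. mark A u = NGrey)))"

lemma Final_unfold:
  "Final = Seq (Loop check_node_cmd) (Seq (If (R flag) FailC Skip) (Seq (R delete_counter) (Loop (R no_deg_inv))))"
  unfolding Final_def check_node_cmd_def check_edge_cmd_def ..

lemma wp_Final:
  assumes I: "check_inv c d D A G"
  shows "wp Final (final_post D) G"
  unfolding Final_unfold
proof (rule wp_seq)
  show "wp (Loop check_node_cmd) (case_result (\<lambda>H. \<exists>A. check_inv c d D A H \<and> (\<forall>u\<in>V. mark A u \<noteq> NBlue)) False) G"
    by (rule wp_loop[where I = "check_inv c d D" and \<mu> = blue_count, OF I])
      (fastforce elim!: wp_mono[OF wp_check_node] split: result.splits)
next
  fix H1 assume "\<exists>A. check_inv c d D A H1 \<and> (\<forall>u\<in>V. mark A u \<noteq> NBlue)"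
  then obtain A1 where I1: "check_inv c d D A1 H1" and no_blue: "\<forall>u\<in>V. mark A1 u \<noteq> NBlue" by blast
  note flag_iff = check_inv_exit(2)[OF I1 no_blue]
  show "wp (Seq (If (R flag) FailC Skip) (Seq (R delete_counter) (Loop (R no_deg_inv)))) (final_post D) H1"
  proof (rule wp_seq[where M = "\<lambda>H. H = H1 \<and> \<not> (\<exists>e\<in>E. relaxable D e)"])
    show "wp (If (R flag) FailC Skip) (case_result (\<lambda>H. H = H1 \<and> \<not> (\<exists>e\<in>E. relaxable D e))
      (\<exists>e\<in>E. relaxable D e)) H1"
      by (rule wp_if[OF wp_check_flag[OF I1]]) (use flag_iff in \<open>auto intro: wp_fail wp_skip\<close>)
  next
    fix H2 assume H2: "H2 = H1 \<and> \<not> (\<exists>e\<in>E. relaxable D e)"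
    have "wp (Seq (R delete_counter) (Loop (R no_deg_inv))) (final_post D) H1"
      by (rule wp_seq[OF wp_delete_counter[OF I1 no_blue]])
        (use H2 in \<open>auto elim!: wp_mono[OF wp_restore_marks] simp: final_post_def split: result.splits\<close>)
    then show "wp (Seq (R delete_counter) (Loop (R no_deg_inv))) (final_post D) H2" using H2 by simp
  qed (simp add: final_post_def)
qed simp

lemma bellman_ford_unfold:
  "bellman_ford = Seq (R set_counter) (Seq (Loop (R count)) (Seq (Loop round_cmd) Final))"
  unfolding bellman_ford_def round_cmd_def ..

theorem wp_bellman_ford:
  "wp bellman_ford (\<lambda>Res. \<exists>D. walk_bound rounds D \<and> walk_realised D \<and> final_post D Res) G0"
  unfolding bellman_ford_unfold
proof (rule wp_seq)
  show "wp (R set_counter) (case_result (\<lambda>H. \<exists>c d. repr c d init_state H) False) G0"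
    using repr_set_counter set_counter_applicable by (intro wp_rule) blast+
next
  fix H1 assume "\<exists>c d. repr c d init_state H1"
  then obtain c d where "repr c d init_state H1" by blast
  then show "wp (Seq (Loop (R count)) (Seq (Loop round_cmd) Final))
      (\<lambda>Res. \<exists>D. walk_bound rounds D \<and> walk_realised D \<and> final_post D Res) H1"
  proof (rule wp_seq[OF wp_count_loop])
    fix H2 assume "\<exists>A. round_inv c d 0 A init_est H2"
    then obtain A2 where "round_inv c d 0 A2 init_est H2" by blast
    then show "wp (Seq (Loop round_cmd) Final)
        (\<lambda>Res. \<exists>D. walk_bound rounds D \<and> walk_realised D \<and> final_post D Res) H2"
    proof (rule wp_seq[OF wp_rounds])
      fix H3 assume "\<exists>A D. round_inv c d rounds A D H3"
      then obtain A3 D3 where I3: "round_inv c d rounds A3 D3 H3" by blast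
      then have "walk_bound rounds D3" "walk_realised D3" unfolding round_inv_def by auto
      then show "wp Final (\<lambda>Res. \<exists>D. walk_bound rounds D \<and> walk_realised D \<and> final_post D Res) H3"
        by (intro wp_mono[OF wp_Final[OF round_inv_check_inv[OF I3]]]) blast
    qed simp
  qed simp
qed simp

lemma restore_inv_iso:
  assumes I: "restore_inv D A H" and grey: "\<forall>u\<in>V. mark A u = NGrey"
    and est: "\<forall>v\<in>V. D v = (if reachable G0 r v then Some (dist G0 r v) else None)"
  shows "iso H (bf_output G0 r)"
proof -
  have repr: "repr_final A H" using I unfolding restore_inv_def by blast
  then have inj: "inj_on (place A) V" and nodes: "nodes H = place A ` V" and edges: "edges H = E"
    and fixed: "\<forall>v\<in>V. v \<notin> isolated \<longrightarrow> place A v = v"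
    unfolding repr_final_def by auto
  let ?f = "inv_into V (place A)"
  have "bij_betw ?f (nodes H) (nodes (bf_output G0 r))"
    unfolding nodes by (simp add: bf_output_def bij_betw_inv_into inj_on_imp_bij_betw[OF inj])
  moreover have "bij_betw id (edges H) (edges (bf_output G0 r))"
    unfolding edges by (simp add: bf_output_def)
  moreover have "?f (src G0 e) = src G0 e" "?f (tgt G0 e) = tgt G0 e" if "e \<in> E" for e
    using fixed edge_ends[OF that] edge_ends_not_isolated[OF that] inv_into_f_f[OF inj] by metis+
  then have "\<forall>e\<in>edges H. src (bf_output G0 r) (id e) = ?f (src H e) \<and>
      tgt (bf_output G0 r) (id e) = ?f (tgt H e) \<and> elab (bf_output G0 r) (id e) = elab H e \<and>
      emark (bf_output G0 r) (id e) = emark H e"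
    using repr I unfolding repr_final_def restore_inv_def edges by (auto simp: bf_output_def)
  moreover have "nlab (bf_output G0 r) (?f u) = nlab H u \<and> nmark (bf_output G0 r) (?f u) = nmark H u \<and>
      isroot (bf_output G0 r) (?f u) = isroot H u" if u: "u \<in> nodes H" for u
  proof -
    obtain v where v: "v \<in> V" "u = place A v" using u nodes by auto
    then have "?f u = v" using inv_into_f_f[OF inj] by simp
    moreover have "nlab H u = est_lab D v" "nmark H u = NGrey" "isroot H u = (v = r)"
      using repr I grey v unfolding repr_final_def restore_inv_def by auto
    ultimately show ?thesis
      using est v(1) all_grey input_sole_root root_flag unfolding bf_output_def est_lab_def by auto
  qed
  ultimately show ?thesis unfolding iso_def by blast
qed

theorem bellman_ford_correct:
  "wp bellman_ford (\<lambda>Res. if neg_cycle_reachable G0 r then Res = Fail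
     else \<exists>H. Res = Ok H \<and> iso H (bf_output G0 r)) G0"
proof (rule wp_mono[OF wp_bellman_ford], elim exE conjE)
  fix Res D assume bound: "walk_bound rounds D" and real: "walk_realised D" and post: "final_post D Res"
  show "if neg_cycle_reachable G0 r then Res = Fail else \<exists>H. Res = Ok H \<and> iso H (bf_output G0 r)"
  proof (cases "neg_cycle_reachable G0 r")
    case True
    then show ?thesis using neg_cycle_relaxable[OF bound] post unfolding final_post_def by auto
  next
    case False
    then have "\<not> (\<exists>e\<in>E. relaxable D e)" using not_relaxable[OF bound real] by blast
    then obtain A H where "Res = Ok H" "restore_inv D A H" "\<forall>u\<in>V. mark A u = NGrey"
      using post unfolding final_post_def by auto
    then show ?thesis using False restore_inv_iso est_eq_dist[OF bound real False] by auto
  qed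
qed

end

theorem mainTheorem7:
  fixes G :: hgraph and r :: nat
  assumes "wf_hgraph G"
    and "\<forall>v\<in>nodes G. nmark G v = NGrey"
    and "r \<in> nodes G" and "isroot G r" and "\<forall>v\<in>nodes G. isroot G v \<longrightarrow> v = r"
    and "\<forall>e\<in>edges G. emark G e = EUnmarked"
    and "\<forall>e\<in>edges G. \<exists>w. elab G e = [AInt w]"
    and "\<forall>e\<in>edges G. src G e \<noteq> tgt G e"
  shows "terminates bellman_ford G \<and>
    (if neg_cycle_reachable G r
     then exec bellman_ford G Fail \<and> (\<forall>Res. exec bellman_ford G Res \<longrightarrow> Res = Fail)
     else (\<exists>H. exec bellman_ford G (Ok H)) \<and>
          (\<forall>Res. exec bellman_ford G Res \<longrightarrow> (\<exists>H. Res = Ok H \<and> iso H (bf_output G r))))"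
proof -
  interpret bf_input G r
    by (intro bf_input.intro rooted_graph.intro bf_input_axioms.intro) (use assms in blast)+
  have terminates: "terminates bellman_ford G" and result: "\<exists>Res. exec bellman_ford G Res"
    and post: "\<And>Res. exec bellman_ford G Res \<Longrightarrow> if neg_cycle_reachable G r then Res = Fail
      else \<exists>H. Res = Ok H \<and> iso H (bf_output G r)"
    using bellman_ford_correct unfolding wp_def by blast+
  show ?thesis
  proof (cases "neg_cycle_reachable G r")
    case True
    with post have "exec bellman_ford G Res \<Longrightarrow> Res = Fail" for Res by simp
    with terminates result show ?thesis unfolding if_P[OF True] by blast
  next
    case False
    with post have "exec bellman_ford G Res \<Longrightarrow> \<exists>H. Res = Ok H \<and> iso H (bf_output G r)" for Res by simp
    with terminates result show ?thesis unfolding if_not_P[OF False] by blast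
  qed
qed

end
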